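(* Let $f,g_1,\dots,g_m:\mathbb{R}^n\to\mathbb{R}^n$ be $C^\infty$ vector fields, $\check x\in\mathbb{R}^n$, $\Psi:\mathbb{R}\times\mathbb{R}^n\to\mathbb{R}$ of class $C^1$, and let the target be $\mathfrak{T}:=\{(t,x):\ \varphi_i(t,x)\le 0,\ \psi_j(t,x)=0,\ i=1,\dots,r_1,\ j=1,\dots,r_2\}$ with $\varphi_i,\psi_j:\mathbb{R}\times\mathbb{R}^n\to\mathbb{R}$ of class $C^1$. Let $(\bar T,\bar u,\bar x)$ be a feasible strict sense process and let $(\bar S,\bar w^0,\bar w,\bar y^0,\bar y):=\mathcal{I}(\bar T,\bar u,\bar x)$. Then $(\bar T,\bar u,\bar x)$ is a strict sense $L^\infty$-local minimizer for problem $(P)$ if and only if $(\bar S,\bar w^0,\bar w,\bar y^0,\bar y)$ is an $L^\infty$-local minimizer for problem $(P^e)$ among the feasible space-time processes $(S,w^0,w,y^0,y)$ with $w^0>0$ a.e.; that is, if and only if there exists $\delta'>0$ such that $\Psi((\bar y^0,\bar y)(\bar S))\le\Psi((y^0,y)(S))$ for all feasible space-time processes $(S,w^0,w,y^0,y)$ with $w^0>0$ a.e. on $[0,S]$ and ${\rm d}\big((y^0(S),y,\nu[w]),(\bar y^0(\bar S),\bar y,\nu[\bar w])\big)<\delta'$. Moreover $\Psi((\bar y^0,\bar y)(\bar S))=\Psi(\bar T,\bar x(\bar T))$.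
   Context: Strict sense process: $(T,u,x)$ with $T>0$, $u\in L^1([0,T],\mathbb{R}^m)$, $x$ the unique Carathéodory solution on $[0,T]$ of $\dot x=f(x)+\sum_{i=1}^m g_i(x)u^i$, $x(0)=\check x$; it is feasible if $(T,x(T))\in\mathfrak{T}$. Let $\mathcal{W}:=\{(w^0,w)\in\mathbb{R}\times\mathbb{R}^m:\ w^0\ge0,\ w^0+|w|=1\}$. Space-time process: $(S,w^0,w,y^0,y)$ with $S>0$, $(w^0,w)\in L^\infty([0,S],\mathcal{W})$, $(y^0,y)$ the unique Carathéodory solution on $[0,S]$ of $\frac{dy^0}{ds}=w^0$, $\frac{dy}{ds}=f(y)w^0+\sum_i g_i(y)w^i$, $(y^0,y)(0)=(0,\check x)$; feasible if $(y^0(S),y(S))\in\mathfrak{T}$. For $u\in L^1(I,\mathbb{R}^k)$, $\nu[u](t):=\int_0^t|u(\tau)|d\tau$. For $\tau_1,\tau_2>0$ and continuous $z_1:[0,\tau_1]\to\mathbb{R}^q$, $z_2:[0,\tau_2]\to\mathbb{R}^q$, ${\rm d}((\tau_1,z_1),(\tau_2,z_2)):=|\tau_1-\tau_2|+\|\tilde z_1-\tilde z_2\|_\infty$, where $\tilde z$ is the constant continuous extension of $z$ to $[0,+\infty)$. A feasible strict sense process $(\bar T,\bar u,\bar x)$ is a strict sense $L^\infty$-local minimizer of $(P)$ if there is $\delta>0$ with $\Psi(\bar T,\bar x(\bar T))\le\Psi(T,x(T))$ for every feasible strict sense process $(T,u,x)$ with ${\rm d}((T,x,\nu[u]),(\bar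 T,\bar x,\nu[\bar u]))<\delta$. The map $\mathcal{I}$: given a strict sense process $(T,u,x)$, let $\sigma(t):=\int_0^t(1+|u|)d\tau$, $S:=\sigma(T)$, $y^0:=\sigma^{-1}$, $w^0(s):=(1+|u(y^0(s))|)^{-1}$, $w(s):=w^0(s)u(y^0(s))$, $y(s):=x(y^0(s))$, and $\mathcal{I}(T,u,x):=(S,w^0,w,y^0,y)$, which is a space-time process with $w^0>0$ a.e. *)

theory Defs
  imports "HOL-Analysis.Analysis"
begin

definition partial_deriv :: "'n::finite \<Rightarrow> (real^'n \<Rightarrow> real^'k) \<Rightarrow> real^'n \<Rightarrow> real^'k" where
  "partial_deriv i h x = vector_derivative (\<lambda>t. h (x + t *\<^sub>R axis i 1)) (at 0)"

inductive_set higher_partials :: "(real^'n::finite \<Rightarrow> real^'k) \<Rightarrow> (real^'n \<Rightarrow> real^'k) set"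
  for f where
  base: "f \<in> higher_partials f"
| step: "h \<in> higher_partials f \<Longrightarrow> partial_deriv i h \<in> higher_partials f"

definition smooth_field :: "(real^'n::finite \<Rightarrow> real^'k) \<Rightarrow> bool" where
  "smooth_field f \<longleftrightarrow> (\<forall>h \<in> higher_partials f.
      continuous_on UNIV h \<and> (\<forall>i x. (\<lambda>t. h (x + t *\<^sub>R axis i 1)) differentiable (at 0)))"

definition C1_fun :: "('a::real_normed_vector \<Rightarrow> 'b::real_normed_vector) \<Rightarrow> bool" where
  "C1_fun F \<longleftrightarrow> (\<exists>F'. (\<forall>z. (F has_derivative blinfun_apply (F' z)) (at z)) \<and> continuous_on UNIV F')"

definition carath_sol :: "(real \<Rightarrow> 'a::euclidean_space \<Rightarrow> 'a) \<Rightarrow> 'a \<Rightarrow> real \<Rightarrow> (real \<Rightarrow> 'a) \<Rightarrow> bool" where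
  "carath_sol F a T z \<longleftrightarrow>
     (\<lambda>t. F t (z t)) absolutely_integrable_on {0..T} \<and>
     (\<forall>t\<in>{0..T}. z t = a + integral {0..t} (\<lambda>\<tau>. F \<tau> (z \<tau>)))"

definition unique_carath_sol :: "(real \<Rightarrow> 'a::euclidean_space \<Rightarrow> 'a) \<Rightarrow> 'a \<Rightarrow> real \<Rightarrow> (real \<Rightarrow> 'a) \<Rightarrow> bool" where
  "unique_carath_sol F a T z \<longleftrightarrow> carath_sol F a T z \<and>
     (\<forall>z'. carath_sol F a T z' \<longrightarrow> (\<forall>t\<in>{0..T}. z' t = z t))"

definition ctrl_dyn :: "(real^'n \<Rightarrow> real^'n) \<Rightarrow> ('m::finite \<Rightarrow> real^'n \<Rightarrow> real^'n)
    \<Rightarrow> real^'m \<Rightarrow> real^'n \<Rightarrow> real^'n" where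
  "ctrl_dyn f g v x = f x + (\<Sum>i\<in>UNIV. (v $ i) *\<^sub>R g i x)"

definition target :: "nat \<Rightarrow> (nat \<Rightarrow> real \<times> (real^'n) \<Rightarrow> real) \<Rightarrow> nat \<Rightarrow> (nat \<Rightarrow> real \<times> (real^'n) \<Rightarrow> real)
    \<Rightarrow> (real \<times> (real^'n)) set" where
  "target r1 \<phi> r2 \<psi> = {tx. (\<forall>i<r1. \<phi> i tx \<le> 0) \<and> (\<forall>j<r2. \<psi> j tx = 0)}"

definition strict_process :: "(real^'n \<Rightarrow> real^'n) \<Rightarrow> ('m::finite \<Rightarrow> real^'n \<Rightarrow> real^'n) \<Rightarrow> real^'n
    \<Rightarrow> real \<Rightarrow> (real \<Rightarrow> real^'m) \<Rightarrow> (real \<Rightarrow> real^'n) \<Rightarrow> bool" where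
  "strict_process f g x0 T u x \<longleftrightarrow> T > 0 \<and> u absolutely_integrable_on {0..T} \<and>
     unique_carath_sol (\<lambda>t z. ctrl_dyn f g (u t) z) x0 T x"

definition strict_feasible where
  "strict_feasible f g x0 \<TT> T u x \<longleftrightarrow> strict_process f g x0 T u x \<and> (T, x T) \<in> \<TT>"

definition st_dyn :: "(real^'n \<Rightarrow> real^'n) \<Rightarrow> ('m::finite \<Rightarrow> real^'n \<Rightarrow> real^'n)
    \<Rightarrow> real \<Rightarrow> real^'m \<Rightarrow> real \<times> (real^'n) \<Rightarrow> real \<times> (real^'n)" where
  "st_dyn f g a v yy = (a, a *\<^sub>R f (snd yy) + (\<Sum>i\<in>UNIV. (v $ i) *\<^sub>R g i (snd yy)))"

definition st_process :: "(real^'n \<Rightarrow> real^'n) \<Rightarrow> ('m::finite \<Rightarrow> real^'n \<Rightarrow> real^'n) \<Rightarrow> real^'n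
    \<Rightarrow> real \<Rightarrow> (real \<Rightarrow> real) \<Rightarrow> (real \<Rightarrow> real^'m) \<Rightarrow> (real \<Rightarrow> real) \<Rightarrow> (real \<Rightarrow> real^'n) \<Rightarrow> bool" where
  "st_process f g x0 S w0 w y0 y \<longleftrightarrow> S > 0 \<and>
     w0 \<in> borel_measurable (lebesgue_on {0..S}) \<and> w \<in> borel_measurable (lebesgue_on {0..S}) \<and>
     (AE s in lebesgue_on {0..S}. w0 s \<ge> 0 \<and> w0 s + norm (w s) = 1) \<and>
     unique_carath_sol (\<lambda>s yy. st_dyn f g (w0 s) (w s) yy) (0, x0) S (\<lambda>s. (y0 s, y s))"

definition st_feasible where
  "st_feasible f g x0 \<TT> S w0 w y0 y \<longleftrightarrow> st_process f g x0 S w0 w y0 y \<and> (y0 S, y S) \<in> \<TT>"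

definition nu :: "(real \<Rightarrow> 'a::real_normed_vector) \<Rightarrow> real \<Rightarrow> real" where
  "nu u t = integral {0..t} (\<lambda>\<tau>. norm (u \<tau>))"

definition cext :: "real \<Rightarrow> (real \<Rightarrow> 'a) \<Rightarrow> real \<Rightarrow> 'a" where
  "cext D z t = z (max 0 (min t D))"

text \<open>d((tau1,z1),(tau2,z2)) = |tau1 - tau2| + sup-norm of difference of extensions;
  D1, D2 are the domains [0,D1], [0,D2] of z1, z2.\<close>
definition dproc :: "real \<Rightarrow> real \<Rightarrow> (real \<Rightarrow> 'a::real_normed_vector) \<Rightarrow> real \<Rightarrow> real \<Rightarrow> (real \<Rightarrow> 'a) \<Rightarrow> real" where
  "dproc \<tau>1 D1 z1 \<tau>2 D2 z2 = \<bar>\<tau>1 - \<tau>2\<bar> + (SUP t\<in>{0..}. norm (cext D1 z1 t - cext D2 z2 t))"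

definition strict_Linf_local_min where
  "strict_Linf_local_min f g x0 \<TT> \<Psi> Tb ub xb \<longleftrightarrow>
     strict_feasible f g x0 \<TT> Tb ub xb \<and>
     (\<exists>\<delta>>0. \<forall>T u x. strict_feasible f g x0 \<TT> T u x \<and>
        dproc T T (\<lambda>t. (x t, nu u t)) Tb Tb (\<lambda>t. (xb t, nu ub t)) < \<delta>
        \<longrightarrow> \<Psi> (Tb, xb Tb) \<le> \<Psi> (T, x T))"

definition sigma_I :: "(real \<Rightarrow> 'a::real_normed_vector) \<Rightarrow> real \<Rightarrow> real" where
  "sigma_I u t = integral {0..t} (\<lambda>\<tau>. 1 + norm (u \<tau>))"

end

theory Submission
  imports Defs
begin

(*
  The map I is a change of time. For a strict sense process (T, u, x) the parameter
  s = sigma(t) = int_0^t (1 + |u|) is a strictly increasing absolutely continuous function of t,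
  and with y0 = sigma^-1, w0 = 1/(1 + |u o y0|), w = w0 (u o y0) the pair (y0, x o y0) solves the
  space-time system; conversely a space-time process with w0 > 0 a.e. comes back from the strict
  sense process with horizon y0(S), control w/w0 read along the inverse of y0 and trajectory
  y o y0^-1. Both directions rest on the change of variables formula for primitives of positive
  densities. Under this correspondence nu[w](s) = s - y0(s), so the graph (y, nu[w]) is the
  graph (x, nu[u]) reparametrized by s = t + nu[u](t). The inverse of this reparametrization is
  1-Lipschitz and the reference graph is uniformly continuous, hence closeness in one distance d
  implies closeness in the other, and local minimality transfers in both directions; the cost is
  unchanged because (y0, y)(S) = (T, x(T)).
*)

definition clamp :: "real \<Rightarrow> real \<Rightarrow> real" where
  "clamp L t = max 0 (min t L)"

lemma clamp_in: "0 \<le> L \<Longrightarrow> clamp L t \<in> {0..L}"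
  by (auto simp: clamp_def)

lemma clamp_id: "t \<in> {0..L} \<Longrightarrow> clamp L t = t"
  by (auto simp: clamp_def)

lemma clamp_mono: "a \<le> b \<Longrightarrow> clamp L a \<le> clamp L b"
  by (auto simp: clamp_def)

lemma clamp_lipschitz: "\<bar>clamp L a - clamp L b\<bar> \<le> \<bar>a - b\<bar>"
  by (auto simp: clamp_def)

lemma continuous_on_clamp: "continuous_on A (clamp L)"
  unfolding clamp_def by (intro continuous_intros)

lemma cext_eq_clamp: "cext D z t = z (clamp D t)"
  by (simp add: cext_def clamp_def)

lemma continuous_on_clamp_ext:
  assumes "continuous_on {0..L} z" "0 \<le> L"
  shows "continuous_on UNIV (\<lambda>t. z (clamp L t))"
  by (rule continuous_on_compose2[OF assms(1) continuous_on_clamp]) (use clamp_in assms(2) in auto)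

lemma borel_measurable_clamp_ext:
  assumes "continuous_on {0..L} z" "0 \<le> L"
  shows "(\<lambda>t. z (clamp L t)) \<in> borel_measurable borel"
  using continuous_on_clamp_ext[OF assms] by (rule borel_measurable_continuous_onI)

lemma absolutely_integrable_iff_set_integrable:
  fixes f :: "real \<Rightarrow> 'b::euclidean_space"
  assumes "(\<lambda>x. indicator S x *\<^sub>R f x) \<in> borel_measurable borel"
  shows "f absolutely_integrable_on S \<longleftrightarrow> set_integrable lborel S f"
  unfolding set_integrable_def by (rule integrable_completion) (use assms in simp)

lemma borel_measurable_imp_lebesgue_on:
  fixes h :: "real \<Rightarrow> 'b::euclidean_space"
  assumes "h \<in> borel_measurable borel"
  shows "h \<in> borel_measurable (lebesgue_on S)"
proof -
  have "h \<in> borel_measurable lebesgue" using assms by (simp add: measurable_completion)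
  then show ?thesis by (rule measurable_restrict_space1)
qed

lemma absolutely_integrable_if_bounded_borel:
  fixes h :: "real \<Rightarrow> 'b::euclidean_space"
  assumes "h \<in> borel_measurable borel" "\<And>t. t \<in> {a..b} \<Longrightarrow> norm (h t) \<le> C"
  shows "h absolutely_integrable_on {a..b}"
  by (rule measurable_bounded_by_integrable_imp_absolutely_integrable[where g="\<lambda>_. C"])
     (use assms borel_measurable_imp_lebesgue_on in \<open>auto intro: integrable_on_const\<close>)

lemma borel_measurable_representative:
  fixes u :: "real \<Rightarrow> 'a::euclidean_space"
  assumes um: "u \<in> borel_measurable (lebesgue_on S)" and S: "S \<in> sets lebesgue"
  obtains u' N where "u' \<in> borel_measurable borel" "N \<in> sets borel" "negligible N"
    "\<And>t. t \<in> S - N \<Longrightarrow> u t = u' t"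
proof -
  let ?f = "\<lambda>t. if t \<in> S then u t else 0"
  have fm: "?f \<in> borel_measurable lebesgue" using borel_measurable_if[OF S, of u] um by simp
  have "\<forall>b\<in>Basis. \<exists>g\<in>borel_measurable lborel. AE x in lborel. ?f x \<bullet> b = g x"
  proof
    fix b :: 'a assume "b \<in> Basis"
    have "(\<lambda>x. ?f x \<bullet> b) \<in> borel_measurable (completion lborel)"
      using fm by (intro borel_measurable_inner) auto
    then show "\<exists>g\<in>borel_measurable lborel. AE x in lborel. ?f x \<bullet> b = g x"
      by (rule completion_ex_borel_measurable_real)
  qed
  then obtain g where g: "\<And>b. b \<in> Basis \<Longrightarrow> g b \<in> borel_measurable lborel"
    and ae: "\<And>b. b \<in> Basis \<Longrightarrow> AE x in lborel. ?f x \<bullet> b = g b x"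
    by metis
  define u' where "u' = (\<lambda>t. \<Sum>b\<in>Basis. g b t *\<^sub>R b)"
  have u'm: "u' \<in> borel_measurable borel"
    unfolding u'_def using g by (intro borel_measurable_sum borel_measurable_scaleR) auto
  have "AE x in lborel. \<forall>b\<in>Basis. ?f x \<bullet> b = g b x"
    by (rule AE_finite_allI[OF finite_Basis]) (rule ae)
  then have "AE x in lborel. ?f x = u' x"
  proof (rule AE_mp, intro AE_I2 impI)
    fix x assume "\<forall>b\<in>Basis. ?f x \<bullet> b = g b x"
    then have "u' x = (\<Sum>b\<in>Basis. (?f x \<bullet> b) *\<^sub>R b)" unfolding u'_def by simp
    then show "?f x = u' x" by (simp add: euclidean_representation)
  qed
  then obtain N where N: "{x \<in> space lborel. \<not> ?f x = u' x} \<subseteq> N" "emeasure lborel N = 0" "N \<in> sets lborel"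
    by (rule AE_E)
  have "N \<in> null_sets lebesgue" using N by (auto intro: null_sets_completion simp: null_sets_def)
  then have "negligible N" by (simp add: negligible_iff_null_sets)
  moreover have "u t = u' t" if "t \<in> S - N" for t
  proof -
    have "t \<notin> {x \<in> space lborel. \<not> ?f x = u' x}" using that N(1) by blast
    then show ?thesis using that by simp
  qed
  ultimately show ?thesis using that u'm N(3) by simp
qed

lemma AE_lebesgue_on_imp_negligible_exception:
  assumes "AE x in lebesgue_on S. P x" "S \<in> sets lebesgue"
  obtains N where "negligible N" "\<And>x. x \<in> S - N \<Longrightarrow> P x"
proof -
  obtain N where N: "\<And>x. x \<in> space (lebesgue_on S) - N \<Longrightarrow> P x" "N \<in> null_sets (lebesgue_on S)"
    using assms(1) by (elim AE_E3) blast
  then have "negligible N"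
    using null_sets_restrict_space[OF assms(2)] by (simp add: negligible_iff_null_sets)
  then show ?thesis using N(1) that by auto
qed

lemma absolutely_integrable_Pair_iff:
  fixes a :: "real \<Rightarrow> 'c::euclidean_space" and b :: "real \<Rightarrow> 'd::euclidean_space"
  shows "(\<lambda>t. (a t, b t)) absolutely_integrable_on S
    \<longleftrightarrow> a absolutely_integrable_on S \<and> b absolutely_integrable_on S"
proof
  assume H: "(\<lambda>t. (a t, b t)) absolutely_integrable_on S"
  show "a absolutely_integrable_on S \<and> b absolutely_integrable_on S"
    using absolutely_integrable_linear[OF H bounded_linear_fst]
      absolutely_integrable_linear[OF H bounded_linear_snd] by (simp add: o_def)
next
  assume H: "a absolutely_integrable_on S \<and> b absolutely_integrable_on S"
  have "((\<lambda>x. (x, 0::'d)) \<circ> a) absolutely_integrable_on S" "((\<lambda>x. (0::'c, x)) \<circ> b) absolutely_integrable_on S"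
    using H by (auto intro!: absolutely_integrable_linear bounded_linear_Pair bounded_linear_zero)
  then have "(\<lambda>t. ((\<lambda>x. (x, 0::'d)) \<circ> a) t + ((\<lambda>x. (0::'c, x)) \<circ> b) t) absolutely_integrable_on S"
    by (rule set_integral_add(1))
  then show "(\<lambda>t. (a t, b t)) absolutely_integrable_on S" by (simp add: o_def)
qed

lemma integral_Pair:
  fixes a :: "real \<Rightarrow> 'c::euclidean_space" and b :: "real \<Rightarrow> 'd::euclidean_space"
  assumes "a integrable_on S" "b integrable_on S"
  shows "integral S (\<lambda>t. (a t, b t)) = (integral S a, integral S b)"
proof -
  have "((\<lambda>t. (a t, 0::'d)) has_integral (integral S a, 0)) S"
    using has_integral_linear[OF integrable_integral[OF assms(1)], of "\<lambda>x. (x, 0)"]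
    by (simp add: o_def bounded_linear_Pair bounded_linear_zero)
  moreover have "((\<lambda>t. (0::'c, b t)) has_integral (0, integral S b)) S"
    using has_integral_linear[OF integrable_integral[OF assms(2)], of "\<lambda>x. (0, x)"]
    by (simp add: o_def bounded_linear_Pair bounded_linear_zero)
  ultimately have "((\<lambda>t. (a t, 0::'d) + (0, b t)) has_integral (integral S a, 0) + (0, integral S b)) S"
    by (rule has_integral_add)
  then show ?thesis by (simp add: integral_unique)
qed

lemma borel_measurable_lebesgue_on_spike:
  fixes h :: "real \<Rightarrow> 'b::euclidean_space"
  assumes "h' \<in> borel_measurable borel" "negligible N" "\<And>t. t \<in> S - N \<Longrightarrow> h t = h' t"
    and "S \<in> sets lebesgue"
  shows "h \<in> borel_measurable (lebesgue_on S)"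
proof -
  have "h' measurable_on S"
    using borel_measurable_imp_lebesgue_on[OF assms(1)] measurable_on_iff_borel_measurable[OF assms(4)]
    by blast
  then have "h measurable_on S" by (rule measurable_on_spike[OF _ assms(2,3)])
  then show ?thesis using measurable_on_iff_borel_measurable[OF assms(4)] by blast
qed

section \<open>Primitives of nonnegative densities and change of variables\<close>

lemma primitive_diff:
  fixes \<rho> :: "real \<Rightarrow> real"
  assumes "\<rho> integrable_on {0..A}" "0 \<le> a" "a \<le> b" "b \<le> A"
  shows "integral {0..b} \<rho> - integral {0..a} \<rho> = integral {a..b} \<rho>"
  using Henstock_Kurzweil_Integration.integral_combine[OF assms(2,3) integrable_on_subinterval[OF assms(1)]] assms by simp

lemma primitive_mono:
  fixes \<rho> :: "real \<Rightarrow> real"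
  assumes "\<And>t. 0 \<le> \<rho> t" "\<rho> integrable_on {0..A}" "0 \<le> a" "a \<le> b" "b \<le> A"
  shows "integral {0..a} \<rho> \<le> integral {0..b} \<rho>"
proof -
  have "0 \<le> integral {a..b} \<rho>"
    by (rule integral_nonneg) (use assms in \<open>auto intro: integrable_on_subinterval\<close>)
  then show ?thesis using primitive_diff[OF assms(2-5)] by simp
qed

lemma integral_pos_if_pos:
  fixes h :: "real \<Rightarrow> real"
  assumes [measurable]: "h \<in> borel_measurable borel" and pos: "\<And>t. 0 < h t"
    and "h integrable_on {a..b}" and "a < b"
  shows "0 < integral {a..b} h"
proof -
  have "h absolutely_integrable_on {a..b}"
    using assms by (intro nonnegative_absolutely_integrable_1) (auto intro: less_imp_le)
  then have si: "set_integrable lborel {a..b} h"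
    by (subst absolutely_integrable_iff_set_integrable[symmetric]) auto
  have eq: "integral {a..b} h = integral\<^sup>L lborel (\<lambda>x. indicator {a..b} x * h x)"
    using set_borel_integral_eq_integral(2)[OF si] by (simp add: set_lebesgue_integral_def)
  have int: "integrable lborel (\<lambda>x. indicator {a..b} x * h x)"
    using si by (simp add: set_integrable_def)
  have nn: "AE x in lborel. 0 \<le> indicator {a..b} x * h x"
    by (rule AE_I2) (use pos[THEN less_imp_le] in \<open>simp add: indicator_def\<close>)
  show ?thesis
  proof (rule ccontr)
    assume "\<not> 0 < integral {a..b} h"
    then have "integral\<^sup>L lborel (\<lambda>x. indicator {a..b} x * h x) = 0"
      using eq nn by (simp add: integral_nonneg_AE eq_iff)
    then have "AE x in lborel. indicator {a..b} x * h x = 0"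
      using integral_nonneg_eq_0_iff_AE[OF int nn] by simp
    then have "AE x in lborel. x \<notin> {a..b}"
      by (rule AE_mp) (use pos in \<open>auto intro!: AE_I2 simp: indicator_def less_imp_neq[symmetric]\<close>)
    then have "emeasure lborel {a..b} = 0"
      by (subst (asm) AE_iff_measurable[of "{a..b}"]) auto
    then show False using \<open>a < b\<close> by simp
  qed
qed

lemma primitive_strict_mono:
  fixes \<rho> :: "real \<Rightarrow> real"
  assumes "\<rho> \<in> borel_measurable borel" "\<And>t. 0 < \<rho> t" "\<rho> integrable_on {0..A}"
    and "0 \<le> a" "a < b" "b \<le> A"
  shows "integral {0..a} \<rho> < integral {0..b} \<rho>"
  using integral_pos_if_pos[OF assms(1,2) integrable_on_subinterval[OF assms(3)] assms(5)]
    primitive_diff[OF assms(3,4) _ assms(6)] assms(4-6) by simp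

lemma primitive_bij_betw:
  fixes \<rho> :: "real \<Rightarrow> real"
  assumes "\<rho> \<in> borel_measurable borel" "\<And>t. 0 < \<rho> t" "\<rho> integrable_on {0..A}" "0 \<le> A"
  shows "bij_betw (\<lambda>t. integral {0..t} \<rho>) {0..A} {0..integral {0..A} \<rho>}"
proof -
  let ?\<phi> = "\<lambda>t. integral {0..t} \<rho>"
  have less: "?\<phi> a < ?\<phi> b" if "0 \<le> a" "a < b" "b \<le> A" for a b
    by (rule primitive_strict_mono[OF assms(1-3) that])
  have le: "?\<phi> a \<le> ?\<phi> b" if "0 \<le> a" "a \<le> b" "b \<le> A" for a b
    using less[of a b] that by (cases "a = b") auto
  have "inj_on ?\<phi> {0..A}"
    by (rule linorder_inj_onI) (use less in \<open>auto simp: order.strict_implies_not_eq\<close>)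
  moreover have "?\<phi> ` {0..A} \<subseteq> {0..integral {0..A} \<rho>}"
    using le[of 0] le[of _ A] by auto
  moreover have "{0..integral {0..A} \<rho>} \<subseteq> ?\<phi> ` {0..A}"
  proof
    fix s assume "s \<in> {0..integral {0..A} \<rho>}"
    then obtain t where "0 \<le> t" "t \<le> A" "?\<phi> t = s"
      using IVT'[of ?\<phi> 0 s A] indefinite_integral_continuous_1[OF assms(3)] assms(4) by auto
    then show "s \<in> ?\<phi> ` {0..A}" by force
  qed
  ultimately show ?thesis unfolding bij_betw_def by blast
qed

lemma primitive_superlevel_set:
  fixes \<rho> :: "real \<Rightarrow> real"
  assumes nn: "\<And>t. 0 \<le> \<rho> t" and ri: "\<rho> integrable_on {0..A}" and A: "0 \<le> A"
    and x: "0 \<le> x" "x < integral {0..A} \<rho>"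
  shows "\<exists>c\<in>{0..A}. integral {0..c} \<rho> = x \<and> {t\<in>{0..A}. x < integral {0..t} \<rho>} = {c<..A}"
proof -
  let ?\<phi> = "\<lambda>t. integral {0..t} \<rho>"
  have cont: "continuous_on {0..A} ?\<phi>" by (rule indefinite_integral_continuous_1[OF ri])
  have mono: "?\<phi> a \<le> ?\<phi> b" if "0 \<le> a" "a \<le> b" "b \<le> A" for a b
    by (rule primitive_mono[OF nn ri that])
  obtain c0 where c0: "0 \<le> c0" "c0 \<le> A" "?\<phi> c0 = x"
    using IVT'[of ?\<phi> 0 x A] cont x A by auto
  define L where "L = {0..A} \<inter> ?\<phi> -` {..x}"
  have "closed L" unfolding L_def by (rule continuous_closed_preimage[OF cont]) auto
  moreover have bdd: "bdd_above L" unfolding L_def by (auto intro: bdd_aboveI[of _ A])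
  moreover have c0L: "c0 \<in> L" using c0 by (auto simp: L_def)
  ultimately have cL: "Sup L \<in> L" using closed_contains_Sup by blast
  have c: "0 \<le> Sup L" "Sup L \<le> A" "?\<phi> (Sup L) = x"
    using cL cSup_upper[OF c0L bdd] mono[of c0 "Sup L"] c0 by (auto simp: L_def)
  have "{t\<in>{0..A}. x < ?\<phi> t} = {Sup L<..A}"
  proof (intro set_eqI iffI)
    fix t assume "t \<in> {t\<in>{0..A}. x < ?\<phi> t}"
    then show "t \<in> {Sup L<..A}" using mono[of t "Sup L"] c by (cases "t \<le> Sup L") auto
  next
    fix t assume t: "t \<in> {Sup L<..A}"
    then have "t \<notin> L" using cSup_upper[OF _ bdd, of t] by auto
    then show "t \<in> {t\<in>{0..A}. x < ?\<phi> t}" using t c by (auto simp: L_def)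
  qed
  then show ?thesis using c by auto
qed

lemma nn_integral_indicator_times:
  fixes \<rho> :: "real \<Rightarrow> real"
  assumes "E \<in> sets borel" "(\<rho> has_integral I) E" "\<And>t. 0 \<le> \<rho> t" "\<rho> \<in> borel_measurable borel"
  shows "(\<integral>\<^sup>+ t. ennreal (indicator E t * \<rho> t) \<partial>lborel) = ennreal I"
proof -
  have "(\<lambda>t. indicator E t * \<rho> t) = (\<lambda>t. if t \<in> E then \<rho> t else 0)"
    by (auto simp: indicator_def)
  then have "((\<lambda>t. indicator E t * \<rho> t) has_integral I) UNIV"
    using has_integral_restrict_UNIV[of E \<rho> I] assms(2) by simp
  moreover have "(\<lambda>t. indicator E t * \<rho> t) \<in> borel_measurable borel"
    using assms(1,4) by measurable
  ultimately show ?thesis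
    using nn_integral_has_integral_lborel[of "\<lambda>t. indicator E t * \<rho> t" I] assms(3)
    by (auto simp: indicator_def)
qed

lemma nn_integral_primitive_superlevel_set:
  fixes \<rho> :: "real \<Rightarrow> real"
  assumes [measurable]: "\<rho> \<in> borel_measurable borel"
    and nn: "\<And>t. 0 \<le> \<rho> t" and ri: "\<rho> integrable_on {0..A}" and A: "0 \<le> A"
  defines "\<phi> \<equiv> \<lambda>t. integral {0..t} \<rho>"
  shows "(\<integral>\<^sup>+ t. ennreal (indicator {t\<in>{0..A}. x < \<phi> t} t * \<rho> t) \<partial>lborel)
           = ennreal (measure lborel ({x<..} \<inter> {0..\<phi> A}))"
proof -
  have mono: "\<phi> a \<le> \<phi> b" if "0 \<le> a" "a \<le> b" "b \<le> A" for a b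
    unfolding \<phi>_def by (rule primitive_mono[OF nn ri that])
  have int: "(\<rho> has_integral (\<phi> b - \<phi> a)) {a..b}" if "0 \<le> a" "a \<le> b" "b \<le> A" for a b
    using primitive_diff[OF ri that] integrable_on_subinterval[OF ri, of a b] that
    unfolding \<phi>_def by (auto intro: integrable_integral)
  consider "x < 0" | "\<phi> A \<le> x" | "0 \<le> x" "x < \<phi> A" by linarith
  then show ?thesis
  proof cases
    case 1
    then have "{t\<in>{0..A}. x < \<phi> t} = {0..A}" using mono[of 0] by (force simp: \<phi>_def)
    moreover have "{x<..} \<inter> {0..\<phi> A} = {0..\<phi> A}" using 1 by auto
    ultimately show ?thesis
      using nn_integral_indicator_times[of "{0..A}" \<rho> "\<phi> A - \<phi> 0"] int[of 0 A] A nn mono[of 0 A]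
      by (simp add: \<phi>_def)
  next
    case 2
    then have "{t\<in>{0..A}. x < \<phi> t} = {}" using mono[of _ A] by force
    moreover have "{x<..} \<inter> {0..\<phi> A} = {}" using 2 by auto
    ultimately show ?thesis by simp
  next
    case 3
    then obtain c where c: "c \<in> {0..A}" "\<phi> c = x" and E: "{t\<in>{0..A}. x < \<phi> t} = {c<..A}"
      using primitive_superlevel_set[OF nn ri A] unfolding \<phi>_def by blast
    have "(\<rho> has_integral (\<phi> A - \<phi> c)) {c<..A}"
      using int[of c A] c
      by (subst has_integral_spike_set_eq[where T="{c..A}"]) (auto intro: negligible_subset[of "{c}"])
    then have "(\<integral>\<^sup>+ t. ennreal (indicator {c<..A} t * \<rho> t) \<partial>lborel) = ennreal (\<phi> A - x)"
      using nn_integral_indicator_times[of "{c<..A}" \<rho>] nn c by auto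
    moreover have "{x<..} \<inter> {0..\<phi> A} = {x<..\<phi> A}" using 3 by auto
    ultimately show ?thesis using 3 E by simp
  qed
qed

text \<open>A primitive of an integrable density is only absolutely continuous, so the change of
  variables below goes through the push-forward of the measure with density \<open>\<rho>\<close>
  rather than through a chain rule.\<close>

lemma distr_density_primitive:
  fixes \<rho> :: "real \<Rightarrow> real"
  assumes [measurable]: "\<rho> \<in> borel_measurable borel"
    and nn: "\<And>t. 0 \<le> \<rho> t" and ri: "\<rho> integrable_on {0..A}" and A: "0 \<le> A"
  defines "\<phi> \<equiv> \<lambda>t. integral {0..t} \<rho>"
  shows "distr (density lborel (\<lambda>t. indicator {0..A} t * \<rho> t)) borel (\<lambda>t. \<phi> (clamp A t))
         = density lborel (indicator {0..\<phi> A})"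
proof (rule measure_eqI_lessThan)
  let ?M = "density lborel (\<lambda>t. ennreal (indicator {0..A} t * \<rho> t))"
  let ?p = "\<lambda>t. \<phi> (clamp A t)"
  have [measurable]: "?p \<in> borel_measurable borel"
    unfolding \<phi>_def by (rule borel_measurable_clamp_ext[OF indefinite_integral_continuous_1[OF ri] A])
  fix x
  have [measurable]: "?p -` {x<..} \<in> sets borel"
    using measurable_sets_borel[of ?p borel "{x<..}"] by simp
  have "emeasure (distr ?M borel ?p) {x<..}
      = (\<integral>\<^sup>+ t. ennreal (indicator {0..A} t * \<rho> t) * indicator (?p -` {x<..}) t \<partial>lborel)"
    by (subst emeasure_distr, simp, simp, subst emeasure_density) auto
  also have "\<dots> = (\<integral>\<^sup>+ t. ennreal (indicator {t\<in>{0..A}. x < \<phi> t} t * \<rho> t) \<partial>lborel)"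
    by (intro nn_integral_cong) (auto simp: indicator_def clamp_id)
  also have "\<dots> = ennreal (measure lborel ({x<..} \<inter> {0..\<phi> A}))"
    unfolding \<phi>_def by (rule nn_integral_primitive_superlevel_set[OF assms(1) nn ri A])
  finally have distr_eq: "emeasure (distr ?M borel ?p) {x<..} = \<dots>" .
  then show "emeasure (distr ?M borel ?p) {x<..} < \<infinity>" by simp
  have "emeasure (density lborel (indicator {0..\<phi> A})) {x<..} = emeasure lborel ({x<..} \<inter> {0..\<phi> A})"
  proof -
    have "emeasure (density lborel (indicator {0..\<phi> A})) {x<..}
        = (\<integral>\<^sup>+ t. indicator {0..\<phi> A} t * indicator {x<..} t \<partial>lborel)"
      by (subst emeasure_density) auto
    also have "\<dots> = (\<integral>\<^sup>+ t. indicator ({x<..} \<inter> {0..\<phi> A}) t \<partial>lborel)"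
      by (intro nn_integral_cong) (simp add: indicator_inter_arith ac_simps)
    finally show ?thesis by (simp only: nn_integral_indicator sets_lborel) simp
  qed
  also have "\<dots> = ennreal (measure lborel ({x<..} \<inter> {0..\<phi> A}))"
  proof (rule emeasure_eq_ennreal_measure)
    have "emeasure lborel ({x<..} \<inter> {0..\<phi> A}) \<le> emeasure lborel {0..\<phi> A}"
      by (rule emeasure_mono) auto
    then show "emeasure lborel ({x<..} \<inter> {0..\<phi> A}) \<noteq> top"
      by (auto simp: top_unique emeasure_lborel_Icc_eq)
  qed
  finally show "emeasure (distr ?M borel ?p) {x<..} = emeasure (density lborel (indicator {0..\<phi> A})) {x<..}"
    using distr_eq by simp
qed simp_all

lemma primitive_change_of_variables:
  fixes \<rho> :: "real \<Rightarrow> real" and h :: "real \<Rightarrow> 'b::euclidean_space"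
  assumes [measurable]: "\<rho> \<in> borel_measurable borel" "h \<in> borel_measurable borel"
    and nn: "\<And>t. 0 \<le> \<rho> t" and ri: "\<rho> integrable_on {0..A}" and A: "0 \<le> A"
  defines "\<phi> \<equiv> \<lambda>t. integral {0..t} \<rho>"
  shows "h absolutely_integrable_on {0..\<phi> A} \<longleftrightarrow> (\<lambda>t. \<rho> t *\<^sub>R h (\<phi> t)) absolutely_integrable_on {0..A}"
    and "h absolutely_integrable_on {0..\<phi> A} \<Longrightarrow>
           integral {0..\<phi> A} h = integral {0..A} (\<lambda>t. \<rho> t *\<^sub>R h (\<phi> t))"
proof -
  let ?p = "\<lambda>t. \<phi> (clamp A t)"
  let ?D = "density lborel (\<lambda>t. ennreal (indicator {0..A} t * \<rho> t))"
  let ?I = "density lborel (\<lambda>x. ennreal (indicator {0..\<phi> A} x))"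
  have distr_eq: "distr ?D borel ?p = ?I"
    using distr_density_primitive[OF assms(1) nn ri A] by (simp add: \<phi>_def ennreal_indicator)
  have [measurable]: "?p \<in> borel_measurable borel"
    unfolding \<phi>_def by (rule borel_measurable_clamp_ext[OF indefinite_integral_continuous_1[OF ri] A])
  have pullback: "(\<lambda>t. (indicator {0..A} t * \<rho> t) *\<^sub>R h (?p t))
      = (\<lambda>t. indicator {0..A} t *\<^sub>R (\<rho> t *\<^sub>R h (\<phi> t)))"
    by (rule ext) (auto simp: indicator_def clamp_id)
  have "(\<lambda>t. indicator {0..A} t *\<^sub>R (\<rho> t *\<^sub>R h (\<phi> t))) \<in> borel_measurable borel"
    unfolding pullback[symmetric] by measurable
  then have ai_lhs: "(\<lambda>t. \<rho> t *\<^sub>R h (\<phi> t)) absolutely_integrable_on {0..A}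
      \<longleftrightarrow> set_integrable lborel {0..A} (\<lambda>t. \<rho> t *\<^sub>R h (\<phi> t))"
    by (rule absolutely_integrable_iff_set_integrable)
  have ai_rhs: "h absolutely_integrable_on {0..\<phi> A} \<longleftrightarrow> set_integrable lborel {0..\<phi> A} h"
    by (rule absolutely_integrable_iff_set_integrable) measurable
  have "integrable ?I h \<longleftrightarrow> set_integrable lborel {0..\<phi> A} h"
    unfolding set_integrable_def by (subst integrable_density) auto
  moreover have "integrable (distr ?D borel ?p) h \<longleftrightarrow> set_integrable lborel {0..A} (\<lambda>t. \<rho> t *\<^sub>R h (\<phi> t))"
    unfolding set_integrable_def pullback[symmetric]
    by (subst integrable_distr_eq, simp, simp, subst integrable_density) (auto simp: nn)
  ultimately show iff: "h absolutely_integrable_on {0..\<phi> A} \<longleftrightarrow> (\<lambda>t. \<rho> t *\<^sub>R h (\<phi> t)) absolutely_integrable_on {0..A}"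
    using ai_lhs ai_rhs distr_eq by simp
  assume "h absolutely_integrable_on {0..\<phi> A}"
  then have si: "set_integrable lborel {0..\<phi> A} h" "set_integrable lborel {0..A} (\<lambda>t. \<rho> t *\<^sub>R h (\<phi> t))"
    using iff ai_lhs ai_rhs by simp_all
  have "integral {0..\<phi> A} h = integral\<^sup>L ?I h"
    using set_borel_integral_eq_integral(2)[OF si(1)]
    by (simp add: set_lebesgue_integral_def integral_density)
  also have "\<dots> = integral\<^sup>L (distr ?D borel ?p) h" using distr_eq by simp
  also have "\<dots> = (LINT t:{0..A}|lborel. \<rho> t *\<^sub>R h (\<phi> t))"
    unfolding set_lebesgue_integral_def pullback[symmetric]
    by (subst integral_distr, simp, simp, subst integral_density) (auto simp: nn)
  also have "\<dots> = integral {0..A} (\<lambda>t. \<rho> t *\<^sub>R h (\<phi> t))"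
    using set_borel_integral_eq_integral(2)[OF si(2)] .
  finally show "integral {0..\<phi> A} h = integral {0..A} (\<lambda>t. \<rho> t *\<^sub>R h (\<phi> t))" .
qed

lemma negligible_if_indicator_has_integral_0:
  assumes "E \<subseteq> {a..b}" "(indicat_real E has_integral 0) {a..b}"
  shows "negligible E"
proof -
  have "((\<lambda>x. if x \<in> {a..b} then indicat_real E x else 0) has_integral 0) UNIV"
    using has_integral_restrict_UNIV[of "{a..b}" "indicat_real E" 0] assms(2) by blast
  moreover have "(\<lambda>x. if x \<in> {a..b} then indicat_real E x else 0) = indicat_real E"
    using assms(1) by (intro ext) (auto simp: indicator_def)
  ultimately have "(indicat_real E has_integral 0) UNIV" by simp
  then have "E \<in> lmeasurable \<and> 0 = measure lebesgue E"
    using lmeasurable_iff_indicator_has_integral by blast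
  then show ?thesis by (simp add: negligible_iff_measure)
qed

lemma negligible_if_primitive_image:
  fixes \<rho> :: "real \<Rightarrow> real"
  assumes [measurable]: "\<rho> \<in> borel_measurable borel" "E \<in> sets borel"
    and nn: "\<And>t. 0 \<le> \<rho> t" and ri: "\<rho> integrable_on {0..A}" and A: "0 \<le> A"
    and E: "E \<subseteq> {0..integral {0..A} \<rho>}"
    and N: "negligible N" "\<And>t. t \<in> {0..A} - N \<Longrightarrow> integral {0..t} \<rho> \<notin> E"
  shows "negligible E"
proof -
  let ?\<phi> = "\<lambda>t. integral {0..t} \<rho>"
  have zero: "\<rho> t *\<^sub>R indicat_real E (?\<phi> t) = 0" if "t \<in> {0..A} - N" for t
    using N(2)[OF that] by simp
  have "(\<lambda>t. \<rho> t *\<^sub>R indicat_real E (?\<phi> t)) absolutely_integrable_on {0..A}"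
    by (rule absolutely_integrable_spike[where f="\<lambda>_. 0" and S=N]) (use N(1) zero in \<open>auto simp: set_integrable_def\<close>)
  then have ai: "indicat_real E absolutely_integrable_on {0..?\<phi> A}"
    using primitive_change_of_variables(1)[OF assms(1) _ nn ri A, of "indicat_real E"] by simp
  have "integral {0..?\<phi> A} (indicat_real E) = integral {0..A} (\<lambda>t. \<rho> t *\<^sub>R indicat_real E (?\<phi> t))"
    using primitive_change_of_variables(2)[OF assms(1) _ nn ri A ai] by simp
  also have "\<dots> = 0"
    using integral_spike[OF N(1), of "{0..A}" "\<lambda>_. 0" "\<lambda>t. \<rho> t *\<^sub>R indicat_real E (?\<phi> t)"] zero
    by simp
  finally have "(indicat_real E has_integral 0) {0..?\<phi> A}"
    using ai by (metis integrable_integral set_lebesgue_integral_eq_integral(1))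
  then show ?thesis
    by (rule negligible_if_indicator_has_integral_0[OF E])
qed

lemma inv_into_cong:
  assumes "\<And>x. x \<in> A \<Longrightarrow> f x = g x"
  shows "inv_into A f y = inv_into A g y"
  unfolding inv_into_def using assms by metis

lemma continuous_on_inv_into_interval:
  fixes \<sigma> :: "real \<Rightarrow> real"
  assumes "continuous_on {a..b} \<sigma>" "inj_on \<sigma> {a..b}"
  shows "continuous_on (\<sigma> ` {a..b}) (inv_into {a..b} \<sigma>)"
proof -
  have "continuous_on (\<sigma> ` {a..b}) (the_inv_into {a..b} \<sigma>)"
    by (rule continuous_on_inv_into) (use assms in auto)
  moreover have "the_inv_into {a..b} \<sigma> y = inv_into {a..b} \<sigma> y" if "y \<in> \<sigma> ` {a..b}" for y
    using that assms(2) by (auto simp: the_inv_into_f_f)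
  ultimately show ?thesis using continuous_on_cong by blast
qed

definition primitive_inv :: "(real \<Rightarrow> real) \<Rightarrow> real \<Rightarrow> real \<Rightarrow> real" where
  "primitive_inv \<rho> A s = inv_into {0..A} (\<lambda>t. integral {0..t} \<rho>) (clamp (integral {0..A} \<rho>) s)"

context
  fixes \<rho> :: "real \<Rightarrow> real" and A :: real
  assumes \<rho>_borel: "\<rho> \<in> borel_measurable borel" and \<rho>_pos: "\<And>t. 0 < \<rho> t"
    and \<rho>_int: "\<rho> integrable_on {0..A}" and A: "0 \<le> A"
begin

private lemma bij: "bij_betw (\<lambda>t. integral {0..t} \<rho>) {0..A} {0..integral {0..A} \<rho>}"
  by (rule primitive_bij_betw[OF \<rho>_borel \<rho>_pos \<rho>_int A])

private lemma total_nonneg: "0 \<le> integral {0..A} \<rho>"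
  using \<rho>_pos by (intro integral_nonneg \<rho>_int less_imp_le)

lemma primitive_inv_in: "primitive_inv \<rho> A s \<in> {0..A}"
  unfolding primitive_inv_def
  by (rule inv_into_into) (use bij clamp_in[OF total_nonneg, of s] in \<open>auto simp: bij_betw_def\<close>)

lemma primitive_primitive_inv:
  "s \<in> {0..integral {0..A} \<rho>} \<Longrightarrow> integral {0..primitive_inv \<rho> A s} \<rho> = s"
  unfolding primitive_inv_def clamp_id[of s]
  by (rule f_inv_into_f[where f="\<lambda>t. integral {0..t} \<rho>"]) (use bij in \<open>auto simp: bij_betw_def\<close>)

lemma primitive_inv_primitive:
  assumes "t \<in> {0..A}"
  shows "primitive_inv \<rho> A (integral {0..t} \<rho>) = t"
proof -
  have "integral {0..t} \<rho> \<in> {0..integral {0..A} \<rho>}"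
    using bij assms by (auto simp: bij_betw_def)
  note in_range = this
  show ?thesis
    unfolding primitive_inv_def clamp_id[OF in_range]
    using inv_into_f_f[OF _ assms, of "\<lambda>t. integral {0..t} \<rho>"] bij by (simp add: bij_betw_def)
qed

lemma continuous_primitive_inv: "continuous_on UNIV (primitive_inv \<rho> A)"
proof -
  have "continuous_on {0..integral {0..A} \<rho>} (inv_into {0..A} (\<lambda>t. integral {0..t} \<rho>))"
    using continuous_on_inv_into_interval[OF indefinite_integral_continuous_1[OF \<rho>_int]] bij
    by (simp add: bij_betw_def)
  then show ?thesis
    unfolding primitive_inv_def[abs_def]
    by (rule continuous_on_clamp_ext[OF _ total_nonneg])
qed

lemma primitive_inv_mono:
  assumes "a \<le> b"
  shows "primitive_inv \<rho> A a \<le> primitive_inv \<rho> A b"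
proof (rule ccontr)
  let ?B = "integral {0..A} \<rho>"
  assume "\<not> primitive_inv \<rho> A a \<le> primitive_inv \<rho> A b"
  then have "integral {0..primitive_inv \<rho> A b} \<rho> < integral {0..primitive_inv \<rho> A a} \<rho>"
    using primitive_strict_mono[OF \<rho>_borel \<rho>_pos \<rho>_int] primitive_inv_in[of a] primitive_inv_in[of b]
    by auto
  moreover have "integral {0..primitive_inv \<rho> A x} \<rho> = clamp ?B x" for x
    using primitive_primitive_inv[OF clamp_in[OF total_nonneg, of x]]
    by (simp add: primitive_inv_def clamp_id[OF clamp_in[OF total_nonneg]])
  ultimately have "clamp ?B b < clamp ?B a" by simp
  then show False using clamp_mono[OF assms, of ?B] by simp
qed

lemma negligible_primitive_inv_preimage:
  assumes "N \<in> sets borel" "negligible N"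
  shows "negligible {s \<in> {0..integral {0..A} \<rho>}. primitive_inv \<rho> A s \<in> N}"
proof (rule negligible_if_primitive_image[OF \<rho>_borel _ _ \<rho>_int A _ assms(2)])
  have [measurable]: "primitive_inv \<rho> A \<in> borel_measurable borel"
    using continuous_primitive_inv by (rule borel_measurable_continuous_onI)
  show "{s \<in> {0..integral {0..A} \<rho>}. primitive_inv \<rho> A s \<in> N} \<in> sets borel"
    using assms(1) by measurable
  show "integral {0..t} \<rho> \<notin> {s \<in> {0..integral {0..A} \<rho>}. primitive_inv \<rho> A s \<in> N}"
    if "t \<in> {0..A} - N" for t
    using that primitive_inv_primitive[of t] by auto
qed (use \<rho>_pos less_imp_le in auto)

lemma integral_inverse_density:
  assumes s: "s \<in> {0..integral {0..A} \<rho>}"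
  shows "integral {0..s} (\<lambda>\<sigma>. inverse (\<rho> (primitive_inv \<rho> A \<sigma>))) = primitive_inv \<rho> A s"
proof -
  define t where "t = primitive_inv \<rho> A s"
  have t: "t \<in> {0..A}" "integral {0..t} \<rho> = s"
    using primitive_inv_in primitive_primitive_inv[OF s] by (auto simp: t_def)
  have [measurable]: "primitive_inv \<rho> A \<in> borel_measurable borel"
    using continuous_primitive_inv by (rule borel_measurable_continuous_onI)
  have [measurable]: "\<rho> \<in> borel_measurable borel" by (rule \<rho>_borel)
  have one: "\<rho> \<tau> *\<^sub>R inverse (\<rho> (primitive_inv \<rho> A (integral {0..\<tau>} \<rho>))) = 1" if "\<tau> \<in> {0..t}" for \<tau>
    using that t primitive_inv_primitive[of \<tau>] \<rho>_pos[of \<tau>] by auto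
  have ri: "\<rho> integrable_on {0..t}" using integrable_on_subinterval[OF \<rho>_int] t by auto
  have hb: "(\<lambda>\<sigma>. inverse (\<rho> (primitive_inv \<rho> A \<sigma>))) \<in> borel_measurable borel" by measurable
  have "(\<lambda>\<tau>. \<rho> \<tau> *\<^sub>R inverse (\<rho> (primitive_inv \<rho> A (integral {0..\<tau>} \<rho>)))) absolutely_integrable_on {0..t}"
    by (rule absolutely_integrable_spike[OF absolutely_integrable_if_bounded_borel[of "\<lambda>_. 1::real" 0 t 1]
          negligible_empty]) (use one in auto)
  then have ai: "(\<lambda>\<sigma>. inverse (\<rho> (primitive_inv \<rho> A \<sigma>))) absolutely_integrable_on {0..integral {0..t} \<rho>}"
    using primitive_change_of_variables(1)[OF \<rho>_borel hb _ ri] \<rho>_pos t by (simp add: less_imp_le)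
  have "integral {0..integral {0..t} \<rho>} (\<lambda>\<sigma>. inverse (\<rho> (primitive_inv \<rho> A \<sigma>)))
      = integral {0..t} (\<lambda>\<tau>. \<rho> \<tau> *\<^sub>R inverse (\<rho> (primitive_inv \<rho> A (integral {0..\<tau>} \<rho>))))"
    using primitive_change_of_variables(2)[OF \<rho>_borel hb _ ri _ ai] \<rho>_pos t by (simp add: less_imp_le)
  also have "\<dots> = t" using integral_cong[of "{0..t}", OF one] t by simp
  finally show ?thesis using t by (simp add: t_def)
qed

end

lemma carath_sol_continuous:
  assumes "carath_sol F a T z"
  shows "continuous_on {0..T} z"
proof -
  have "(\<lambda>t. F t (z t)) integrable_on {0..T}"
    using assms set_lebesgue_integral_eq_integral(1) by (auto simp: carath_sol_def)
  then have "continuous_on {0..T} (\<lambda>s. a + integral {0..s} (\<lambda>t. F t (z t)))"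
    by (intro continuous_intros indefinite_integral_continuous_1)
  then show ?thesis
    by (rule continuous_on_cong[THEN iffD1, rotated 2]) (use assms in \<open>auto simp: carath_sol_def\<close>)
qed

lemma carath_sol_cong:
  assumes "negligible N" "\<And>t z. t \<in> {0..T} - N \<Longrightarrow> F t z = G t z"
  shows "carath_sol F a T z \<longleftrightarrow> carath_sol G a T z"
proof -
  have "(\<lambda>t. F t (z t)) absolutely_integrable_on {0..T} \<longleftrightarrow> (\<lambda>t. G t (z t)) absolutely_integrable_on {0..T}"
    by (rule absolutely_integrable_spike_eq[OF assms(1)]) (use assms(2) in auto)
  moreover have "integral {0..t} (\<lambda>\<tau>. F \<tau> (z \<tau>)) = integral {0..t} (\<lambda>\<tau>. G \<tau> (z \<tau>))" if "t \<in> {0..T}" for t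
    by (rule integral_spike[OF assms(1)]) (use assms(2) that in auto)
  ultimately show ?thesis unfolding carath_sol_def by auto
qed

lemma unique_carath_sol_cong:
  assumes "negligible N" "\<And>t z. t \<in> {0..T} - N \<Longrightarrow> F t z = G t z"
  shows "unique_carath_sol F a T z \<longleftrightarrow> unique_carath_sol G a T z"
  unfolding unique_carath_sol_def using carath_sol_cong[OF assms] by simp

lemma unique_carath_sol_cong_sol:
  assumes "\<And>t. t \<in> {0..T} \<Longrightarrow> z t = z' t"
  shows "unique_carath_sol F a T z \<longleftrightarrow> unique_carath_sol F a T z'"
proof -
  have "carath_sol F a T z \<longleftrightarrow> carath_sol F a T z'"
    unfolding carath_sol_def
    using absolutely_integrable_spike_eq[OF negligible_empty, of "{0..T}" "\<lambda>t. F t (z t)" "\<lambda>t. F t (z' t)"]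
      integral_cong[of "{0.._}" "\<lambda>t. F t (z t)" "\<lambda>t. F t (z' t)"] assms by auto
  then show ?thesis unfolding unique_carath_sol_def using assms by auto
qed

lemma smooth_field_continuous: "smooth_field f \<Longrightarrow> continuous_on UNIV f"
  unfolding smooth_field_def using higher_partials.base by blast

lemma st_dyn_scaleR: "st_dyn f g r (r *\<^sub>R v) (a, z) = r *\<^sub>R (1, ctrl_dyn f g v z)"
  by (simp add: st_dyn_def ctrl_dyn_def scaleR_sum_right scaleR_add_right)

lemma borel_measurable_vec_nth [measurable]: "(\<lambda>x::real^'m. x $ i) \<in> borel_measurable borel"
  by (intro borel_measurable_continuous_onI linear_continuous_on bounded_linear_vec_nth)

lemma borel_measurable_ctrl_dyn [measurable]:
  fixes f :: "real^'n \<Rightarrow> real^'n" and g :: "'m::finite \<Rightarrow> real^'n \<Rightarrow> real^'n"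
  assumes [measurable]: "f \<in> borel_measurable borel" "\<And>i. g i \<in> borel_measurable borel"
    "v \<in> borel_measurable borel" "z \<in> borel_measurable borel"
  shows "(\<lambda>t. ctrl_dyn f g (v t) (z t)) \<in> borel_measurable borel"
  unfolding ctrl_dyn_def by measurable

section \<open>Space-time controls with positive time component\<close>

text \<open>The time
  component \<open>y0\<close> of every space-time trajectory is \<open>clock\<close>, its final value is the physical
  horizon, and \<open>ctrl\<close> is the strict sense control \<open>w / w0\<close> expressed in physical time.\<close>

locale space_time_control =
  fixes f :: "real^'n \<Rightarrow> real^'n" and g :: "'m::finite \<Rightarrow> real^'n \<Rightarrow> real^'n"
    and w0 :: "real \<Rightarrow> real" and w :: "real \<Rightarrow> real^'m" and S :: real
  assumes f_cont: "continuous_on UNIV f" and g_cont: "\<And>i. continuous_on UNIV (g i)"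
    and w0_borel [measurable]: "w0 \<in> borel_measurable borel"
    and w_borel [measurable]: "w \<in> borel_measurable borel"
    and w0_pos: "\<And>s. 0 < w0 s" and w0_norm_w: "\<And>s. w0 s + norm (w s) = 1"
    and S_pos: "0 < S"
begin

definition clock :: "real \<Rightarrow> real" where
  "clock s = integral {0..s} w0"

definition horizon :: real where
  "horizon = clock S"

abbreviation clock_inv :: "real \<Rightarrow> real" where
  "clock_inv \<equiv> primitive_inv w0 S"

definition ctrl :: "real \<Rightarrow> real^'m" where
  "ctrl t = inverse (w0 (clock_inv t)) *\<^sub>R w (clock_inv t)"

lemma f_borel [measurable]: "f \<in> borel_measurable borel"
  using f_cont by (rule borel_measurable_continuous_onI)

lemma g_borel [measurable]: "g i \<in> borel_measurable borel"
  using g_cont by (rule borel_measurable_continuous_onI)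

lemma norm_w: "norm (w s) = 1 - w0 s"
  using w0_norm_w[of s] by simp

lemma w0_le_1: "w0 s \<le> 1"
  using w0_norm_w[of s] norm_ge_zero[of "w s"] by linarith

lemma w0_absolutely_integrable: "w0 absolutely_integrable_on {a..b}"
  by (rule absolutely_integrable_if_bounded_borel[where C=1]) (use w0_pos w0_le_1 in \<open>auto simp: abs_le_iff less_imp_le\<close>)

lemma w0_integrable: "w0 integrable_on {a..b}"
  using w0_absolutely_integrable set_lebesgue_integral_eq_integral(1) by blast

lemma clock_bij_betw: "bij_betw clock {0..S} {0..horizon}"
  unfolding clock_def[abs_def] horizon_def
  by (rule primitive_bij_betw[OF w0_borel w0_pos w0_integrable]) (use S_pos in simp)

lemma clock_diff_le: "0 \<le> a \<Longrightarrow> a \<le> b \<Longrightarrow> clock b - clock a \<le> b - a"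
  using primitive_diff[OF w0_integrable, of a b b] w0_integrable[of a b]
    integral_le[of w0 "{a..b}" "\<lambda>_. 1"] w0_le_1 by (simp add: clock_def integrable_on_const)

lemma clock_0 [simp]: "clock 0 = 0"
  by (simp add: clock_def)

lemma horizon_pos: "0 < horizon"
  using primitive_strict_mono[OF w0_borel w0_pos w0_integrable order.refl S_pos order.refl]
  by (simp add: horizon_def clock_def)

lemma clock_in: "s \<in> {0..S} \<Longrightarrow> clock s \<in> {0..horizon}"
  using clock_bij_betw by (auto simp: bij_betw_def)

lemma clock_inv_in: "clock_inv t \<in> {0..S}"
  using primitive_inv_in[OF w0_borel w0_pos w0_integrable] S_pos by simp

lemma clock_clock_inv: "t \<in> {0..horizon} \<Longrightarrow> clock (clock_inv t) = t"
  using primitive_primitive_inv[OF w0_borel w0_pos w0_integrable] S_pos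
  by (simp add: clock_def horizon_def)

lemma clock_inv_clock: "s \<in> {0..S} \<Longrightarrow> clock_inv (clock s) = s"
  using primitive_inv_primitive[OF w0_borel w0_pos w0_integrable] S_pos by (simp add: clock_def)

lemma end_clock [simp]: "clock S = horizon" "clock_inv horizon = S"
  using clock_inv_clock[of S] S_pos by (auto simp: horizon_def)

lemma clock_inv_continuous: "continuous_on UNIV clock_inv"
  using continuous_primitive_inv[OF w0_borel w0_pos w0_integrable] S_pos by simp

lemma clock_inv_borel [measurable]: "clock_inv \<in> borel_measurable borel"
  using clock_inv_continuous by (rule borel_measurable_continuous_onI)

lemma clock_inv_mono: "a \<le> b \<Longrightarrow> clock_inv a \<le> clock_inv b"
  using primitive_inv_mono[OF w0_borel w0_pos w0_integrable] S_pos by simp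

lemma ctrl_borel [measurable]: "ctrl \<in> borel_measurable borel"
  unfolding ctrl_def by measurable

lemma w_eq_ctrl: "s \<in> {0..S} \<Longrightarrow> w s = w0 s *\<^sub>R ctrl (clock s)"
  using w0_pos[of s] by (simp add: ctrl_def clock_inv_clock)

lemma clock_change_of_variables:
  fixes h :: "real \<Rightarrow> 'b::euclidean_space"
  assumes [measurable]: "h \<in> borel_measurable borel" and "0 \<le> s"
  shows "h absolutely_integrable_on {0..clock s} \<longleftrightarrow> (\<lambda>\<sigma>. w0 \<sigma> *\<^sub>R h (clock \<sigma>)) absolutely_integrable_on {0..s}"
    and "h absolutely_integrable_on {0..clock s} \<Longrightarrow>
           integral {0..clock s} h = integral {0..s} (\<lambda>\<sigma>. w0 \<sigma> *\<^sub>R h (clock \<sigma>))"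
  using primitive_change_of_variables[OF w0_borel assms(1) _ w0_integrable assms(2)] w0_pos less_imp_le
  unfolding clock_def[abs_def] by blast+

lemma st_integrand_clock:
  assumes x: "continuous_on {0..horizon} x" and s: "s \<in> {0..S}"
  defines "k \<equiv> \<lambda>t. ctrl_dyn f g (ctrl t) (x t)"
  shows "(\<lambda>\<sigma>. st_dyn f g (w0 \<sigma>) (w \<sigma>) (a \<sigma>, x (clock \<sigma>))) absolutely_integrable_on {0..s}
           \<longleftrightarrow> k absolutely_integrable_on {0..clock s}"
    and "k absolutely_integrable_on {0..clock s} \<Longrightarrow>
           integral {0..s} (\<lambda>\<sigma>. st_dyn f g (w0 \<sigma>) (w \<sigma>) (a \<sigma>, x (clock \<sigma>)))
             = (clock s, integral {0..clock s} k)"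
proof -
  define K where "K t = ctrl_dyn f g (ctrl t) (x (clamp horizon t))" for t
  have [measurable]: "(\<lambda>t. x (clamp horizon t)) \<in> borel_measurable borel"
    by (rule borel_measurable_clamp_ext[OF x]) (use horizon_pos in simp)
  have [measurable]: "K \<in> borel_measurable borel" unfolding K_def by measurable
  have Kk: "K t = k t" if "t \<in> {0..clock s}" for t
    using that clock_in[OF s] by (simp add: K_def k_def clamp_id)
  have integrand: "st_dyn f g (w0 \<sigma>) (w \<sigma>) (a \<sigma>, x (clock \<sigma>)) = (w0 \<sigma>, w0 \<sigma> *\<^sub>R K (clock \<sigma>))"
    if "\<sigma> \<in> {0..s}" for \<sigma>
  proof -
    have "\<sigma> \<in> {0..S}" using that s by auto
    then show ?thesis
      using w_eq_ctrl clock_in by (simp add: st_dyn_scaleR K_def clamp_id)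
  qed
  have "(\<lambda>\<sigma>. st_dyn f g (w0 \<sigma>) (w \<sigma>) (a \<sigma>, x (clock \<sigma>))) absolutely_integrable_on {0..s}
      \<longleftrightarrow> (\<lambda>\<sigma>. (w0 \<sigma>, w0 \<sigma> *\<^sub>R K (clock \<sigma>))) absolutely_integrable_on {0..s}"
    by (rule absolutely_integrable_spike_eq[OF negligible_empty]) (simp add: integrand)
  also have "\<dots> \<longleftrightarrow> K absolutely_integrable_on {0..clock s}"
    using absolutely_integrable_Pair_iff[where a=w0 and b="\<lambda>\<sigma>. w0 \<sigma> *\<^sub>R K (clock \<sigma>)"]
      w0_absolutely_integrable clock_change_of_variables(1)[of K s] s by simp
  also have "\<dots> \<longleftrightarrow> k absolutely_integrable_on {0..clock s}"
    by (rule absolutely_integrable_spike_eq[OF negligible_empty]) (simp add: Kk)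
  finally show iff: "(\<lambda>\<sigma>. st_dyn f g (w0 \<sigma>) (w \<sigma>) (a \<sigma>, x (clock \<sigma>))) absolutely_integrable_on {0..s}
           \<longleftrightarrow> k absolutely_integrable_on {0..clock s}" .
  assume k: "k absolutely_integrable_on {0..clock s}"
  then have K: "K absolutely_integrable_on {0..clock s}"
    by (rule absolutely_integrable_spike[OF _ negligible_empty]) (simp add: Kk)
  then have "(\<lambda>\<sigma>. w0 \<sigma> *\<^sub>R K (clock \<sigma>)) integrable_on {0..s}"
    using clock_change_of_variables(1)[of K s] s set_lebesgue_integral_eq_integral(1) by simp
  then have "integral {0..s} (\<lambda>\<sigma>. st_dyn f g (w0 \<sigma>) (w \<sigma>) (a \<sigma>, x (clock \<sigma>)))
      = (integral {0..s} w0, integral {0..s} (\<lambda>\<sigma>. w0 \<sigma> *\<^sub>R K (clock \<sigma>)))"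
    using integral_cong[of "{0..s}", OF integrand] integral_Pair[OF w0_integrable] by simp
  also have "\<dots> = (clock s, integral {0..clock s} K)"
    using clock_change_of_variables(2)[OF _ _ K] s by (simp add: clock_def)
  also have "integral {0..clock s} K = integral {0..clock s} k"
    by (rule integral_cong) (simp add: Kk)
  finally show "integral {0..s} (\<lambda>\<sigma>. st_dyn f g (w0 \<sigma>) (w \<sigma>) (a \<sigma>, x (clock \<sigma>)))
      = (clock s, integral {0..clock s} k)" .
qed

lemma st_sol_if_ctrl_sol:
  assumes "carath_sol (\<lambda>t z. ctrl_dyn f g (ctrl t) z) x0 horizon x"
  shows "carath_sol (\<lambda>s yy. st_dyn f g (w0 s) (w s) yy) (0, x0) S (\<lambda>s. (clock s, x (clock s)))"
proof -
  let ?k = "\<lambda>t. ctrl_dyn f g (ctrl t) (x t)"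
  have xc: "continuous_on {0..horizon} x" by (rule carath_sol_continuous[OF assms])
  have k: "?k absolutely_integrable_on {0..horizon}"
    and x: "\<And>t. t \<in> {0..horizon} \<Longrightarrow> x t = x0 + integral {0..t} ?k"
    using assms by (auto simp: carath_sol_def)
  have "?k absolutely_integrable_on {0..clock s}" if "s \<in> {0..S}" for s
    by (rule absolutely_integrable_on_subinterval[OF k]) (use clock_in[OF that] in auto)
  then show ?thesis
    unfolding carath_sol_def
    using st_integrand_clock[OF xc, where s=S and a=clock] st_integrand_clock(2)[OF xc, where a=clock]
      x[OF clock_in] k S_pos by simp
qed

lemma ctrl_sol_if_st_sol:
  assumes "carath_sol (\<lambda>s yy. st_dyn f g (w0 s) (w s) yy) (0, x0) S Z"
  shows "\<forall>s\<in>{0..S}. fst (Z s) = clock s"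
    and "carath_sol (\<lambda>t z. ctrl_dyn f g (ctrl t) z) x0 horizon (\<lambda>t. snd (Z (clock_inv t)))"
proof -
  define x where "x t = snd (Z (clock_inv t))" for t
  let ?k = "\<lambda>t. ctrl_dyn f g (ctrl t) (x t)"
  have "continuous_on {0..S} (\<lambda>s. snd (Z s))"
    by (intro continuous_on_snd carath_sol_continuous[OF assms])
  then have xc: "continuous_on {0..horizon} x"
    unfolding x_def using clock_inv_in
    by (intro continuous_on_compose2[OF _ continuous_on_subset[OF clock_inv_continuous]]) auto
  have Zx: "st_dyn f g (w0 s) (w s) (Z s) = st_dyn f g (w0 s) (w s) (fst (Z s), x (clock s))"
    if "s \<in> {0..S}" for s
    using that by (simp add: x_def clock_inv_clock st_dyn_def)
  have Ze: "\<And>s. s \<in> {0..S} \<Longrightarrow> Z s = (0, x0) + integral {0..s} (\<lambda>\<sigma>. st_dyn f g (w0 \<sigma>) (w \<sigma>) (Z \<sigma>))"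
    using assms unfolding carath_sol_def by blast
  have "(\<lambda>s. st_dyn f g (w0 s) (w s) (Z s)) absolutely_integrable_on {0..S}"
    using assms unfolding carath_sol_def by blast
  then have Za: "(\<lambda>s. st_dyn f g (w0 s) (w s) (fst (Z s), x (clock s))) absolutely_integrable_on {0..S}"
    by (rule absolutely_integrable_spike[OF _ negligible_empty]) (simp add: Zx)
  have k: "?k absolutely_integrable_on {0..horizon}"
    using st_integrand_clock(1)[OF xc, of S] Za S_pos by simp
  have Zs: "Z s = (clock s, x0 + integral {0..clock s} ?k)" if s: "s \<in> {0..S}" for s
  proof -
    have "?k absolutely_integrable_on {0..clock s}"
      by (rule absolutely_integrable_on_subinterval[OF k]) (use clock_in[OF s] in auto)
    moreover have "integral {0..s} (\<lambda>\<sigma>. st_dyn f g (w0 \<sigma>) (w \<sigma>) (Z \<sigma>))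
        = integral {0..s} (\<lambda>\<sigma>. st_dyn f g (w0 \<sigma>) (w \<sigma>) (fst (Z \<sigma>), x (clock \<sigma>)))"
      by (rule integral_cong) (use Zx s in auto)
    ultimately show ?thesis
      using Ze[OF s] st_integrand_clock(2)[OF xc s] by simp
  qed
  then show "\<forall>s\<in>{0..S}. fst (Z s) = clock s" by simp
  have "x t = x0 + integral {0..t} ?k" if "t \<in> {0..horizon}" for t
    using Zs[OF clock_inv_in, of t] clock_clock_inv[OF that] unfolding x_def[of t] by simp
  then have "carath_sol (\<lambda>t z. ctrl_dyn f g (ctrl t) z) x0 horizon x"
    using k unfolding carath_sol_def by blast
  then show "carath_sol (\<lambda>t z. ctrl_dyn f g (ctrl t) z) x0 horizon (\<lambda>t. snd (Z (clock_inv t)))"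
    unfolding x_def .
qed

lemma unique_st_sol_if_unique_ctrl_sol:
  assumes "unique_carath_sol (\<lambda>t z. ctrl_dyn f g (ctrl t) z) x0 horizon x"
  shows "unique_carath_sol (\<lambda>s yy. st_dyn f g (w0 s) (w s) yy) (0, x0) S (\<lambda>s. (clock s, x (clock s)))"
  unfolding unique_carath_sol_def
proof (intro conjI allI impI ballI)
  show "carath_sol (\<lambda>s yy. st_dyn f g (w0 s) (w s) yy) (0, x0) S (\<lambda>s. (clock s, x (clock s)))"
    using assms st_sol_if_ctrl_sol by (simp add: unique_carath_sol_def)
  fix Z s
  assume Z: "carath_sol (\<lambda>s yy. st_dyn f g (w0 s) (w s) yy) (0, x0) S Z" and s: "s \<in> {0..S}"
  have "snd (Z (clock_inv t)) = x t" if "t \<in> {0..horizon}" for t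
    using assms ctrl_sol_if_st_sol(2)[OF Z] that by (simp add: unique_carath_sol_def)
  then have "snd (Z s) = x (clock s)"
    using clock_in[OF s] clock_inv_clock[OF s] by metis
  then show "Z s = (clock s, x (clock s))"
    using ctrl_sol_if_st_sol(1)[OF Z] s by (simp add: prod_eq_iff)
qed

lemma unique_ctrl_sol_if_unique_st_sol:
  assumes "unique_carath_sol (\<lambda>s yy. st_dyn f g (w0 s) (w s) yy) (0, x0) S (\<lambda>s. (y0 s, y s))"
  shows "\<forall>s\<in>{0..S}. y0 s = clock s"
    and "unique_carath_sol (\<lambda>t z. ctrl_dyn f g (ctrl t) z) x0 horizon (\<lambda>t. y (clock_inv t))"
proof -
  have Y: "carath_sol (\<lambda>s yy. st_dyn f g (w0 s) (w s) yy) (0, x0) S (\<lambda>s. (y0 s, y s))"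
    using assms by (simp add: unique_carath_sol_def)
  show "\<forall>s\<in>{0..S}. y0 s = clock s" using ctrl_sol_if_st_sol(1)[OF Y] by simp
  show "unique_carath_sol (\<lambda>t z. ctrl_dyn f g (ctrl t) z) x0 horizon (\<lambda>t. y (clock_inv t))"
    unfolding unique_carath_sol_def
  proof (intro conjI allI impI ballI)
    show "carath_sol (\<lambda>t z. ctrl_dyn f g (ctrl t) z) x0 horizon (\<lambda>t. y (clock_inv t))"
      using ctrl_sol_if_st_sol(2)[OF Y] by simp
    fix x t
    assume x: "carath_sol (\<lambda>t z. ctrl_dyn f g (ctrl t) z) x0 horizon x" and t: "t \<in> {0..horizon}"
    from x have "carath_sol (\<lambda>s yy. st_dyn f g (w0 s) (w s) yy) (0, x0) S (\<lambda>s. (clock s, x (clock s)))"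
      by (rule st_sol_if_ctrl_sol)
    then have "x (clock s) = y s" if "s \<in> {0..S}" for s
      using assms that unfolding unique_carath_sol_def by blast
    then show "x t = y (clock_inv t)"
      using clock_inv_in clock_clock_inv[OF t] by metis
  qed
qed

lemma ctrl_absolutely_integrable: "ctrl absolutely_integrable_on {0..horizon}"
proof -
  have "w absolutely_integrable_on {0..S}"
    by (rule absolutely_integrable_if_bounded_borel[where C=1]) (use norm_w w0_pos less_imp_le in auto)
  then have "(\<lambda>s. w0 s *\<^sub>R ctrl (clock s)) absolutely_integrable_on {0..S}"
    by (rule absolutely_integrable_spike[OF _ negligible_empty]) (simp add: w_eq_ctrl)
  then show ?thesis
    using clock_change_of_variables(1)[OF ctrl_borel, of S] S_pos by simp
qed

lemma nu_w: "0 \<le> s \<Longrightarrow> nu w s = s - clock s"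
  using integral_diff[OF integrable_on_const w0_integrable, of 0 s 1]
  by (simp add: nu_def norm_w clock_def)

lemma nu_ctrl:
  assumes "t \<in> {0..horizon}"
  shows "nu ctrl t = clock_inv t - t"
proof -
  have [measurable]: "(\<lambda>t. norm (ctrl t)) \<in> borel_measurable borel" by measurable
  have s: "clock_inv t \<in> {0..S}" and t: "clock (clock_inv t) = t"
    using clock_inv_in clock_clock_inv[OF assms] by auto
  have ai: "(\<lambda>t. norm (ctrl t)) absolutely_integrable_on {0..clock (clock_inv t)}"
    using absolutely_integrable_on_subinterval[OF absolutely_integrable_norm[OF ctrl_absolutely_integrable]]
      assms t by (auto simp: o_def)
  have "w0 \<sigma> *\<^sub>R norm (ctrl (clock \<sigma>)) = norm (w \<sigma>)" if "\<sigma> \<in> {0..clock_inv t}" for \<sigma>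
    using that s w_eq_ctrl[of \<sigma>] w0_pos[of \<sigma>] by simp
  then have "integral {0..clock_inv t} (\<lambda>\<sigma>. w0 \<sigma> *\<^sub>R norm (ctrl (clock \<sigma>))) = nu w (clock_inv t)"
    unfolding nu_def by (rule integral_cong)
  then have "integral {0..clock (clock_inv t)} (\<lambda>t. norm (ctrl t)) = nu w (clock_inv t)"
    using clock_change_of_variables(2)[OF _ _ ai] s by simp
  then show ?thesis using nu_w s t by (simp add: nu_def)
qed

end

section \<open>Reparametrized graphs and the distance\<close>

text \<open>\<open>reparam T x N S y Y0\<close> says that \<open>(y, s - Y0 s)\<close> on \<open>[0, S]\<close> is the graph \<open>(x, N)\<close>
  on \<open>[0, T]\<close> reparametrized by \<open>s = t + N t\<close>, with \<open>Y0\<close> the inverse time change; here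
  \<open>N\<close> plays \<open>\<nu>[u]\<close> and \<open>s - Y0 s\<close> plays \<open>\<nu>[w]\<close>. \<open>stretch\<close> and \<open>unstretch\<close> are the
  time change and its inverse, continued on \<open>[0, \<infinity>)\<close> consistently with \<open>cext\<close>.\<close>

definition stretch :: "real \<Rightarrow> (real \<Rightarrow> real) \<Rightarrow> real \<Rightarrow> real" where
  "stretch T N t = t + N (clamp T t)"

definition unstretch :: "real \<Rightarrow> (real \<Rightarrow> real) \<Rightarrow> real \<Rightarrow> real" where
  "unstretch S Y0 s = Y0 (clamp S s) + (s - clamp S s)"

locale reparam =
  fixes T :: real and x :: "real \<Rightarrow> 'a::real_normed_vector" and N :: "real \<Rightarrow> real"
    and S :: real and y :: "real \<Rightarrow> 'a" and Y0 :: "real \<Rightarrow> real"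
  assumes T_pos: "0 < T" and x_cont: "continuous_on {0..T} x" and N_cont: "continuous_on {0..T} N"
    and N_mono: "\<And>a b. 0 \<le> a \<Longrightarrow> a \<le> b \<Longrightarrow> b \<le> T \<Longrightarrow> N a \<le> N b"
    and N_0: "N 0 = 0" and S_eq: "S = T + N T"
    and Y0_inv: "\<And>s. s \<in> {0..S} \<Longrightarrow> Y0 s \<in> {0..T} \<and> Y0 s + N (Y0 s) = s"
    and y_eq: "\<And>s. s \<in> {0..S} \<Longrightarrow> y s = x (Y0 s)"
begin

lemma T_le_S: "T \<le> S"
  using N_mono[of 0 T] N_0 T_pos S_eq by simp

lemma Y0_S: "Y0 S = T"
  using Y0_inv[of S] N_mono[of "Y0 S" T] T_le_S T_pos S_eq by force

lemma y_S: "y S = x T"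
  using y_eq[of S] Y0_S T_le_S T_pos by simp

lemma stretch_diff_ge:
  assumes "0 \<le> a" "a \<le> b"
  shows "b - a \<le> stretch T N b - stretch T N a"
  using N_mono[OF _ clamp_mono[OF assms(2)]] clamp_in[of T] T_pos
  by (simp add: stretch_def less_imp_le)

lemma stretch_ge: "0 \<le> t \<Longrightarrow> t \<le> stretch T N t"
  using stretch_diff_ge[of 0 t] N_0 by (simp add: stretch_def clamp_def)

lemma unstretch_beyond:
  assumes "S \<le> s"
  shows "unstretch S Y0 s = T + (s - S)" "clamp T (unstretch S Y0 s) = T"
  using assms T_le_S T_pos Y0_S by (auto simp: unstretch_def clamp_def)

lemma stretch_unstretch:
  assumes "0 \<le> s"
  shows "0 \<le> unstretch S Y0 s \<and> stretch T N (unstretch S Y0 s) = s"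
proof (cases "s \<le> S")
  case True
  then show ?thesis using Y0_inv[of s] assms by (simp add: unstretch_def stretch_def clamp_id)
next
  case False
  then show ?thesis using unstretch_beyond[of s] T_pos S_eq by (simp add: stretch_def)
qed

lemma unstretch_stretch:
  assumes "0 \<le> t"
  shows "unstretch S Y0 (stretch T N t) = t"
proof -
  let ?t' = "unstretch S Y0 (stretch T N t)"
  have "0 \<le> stretch T N t" using stretch_ge[OF assms] assms by linarith
  then have "0 \<le> ?t'" "stretch T N ?t' = stretch T N t"
    using stretch_unstretch by auto
  then show ?thesis
    using stretch_diff_ge[of ?t' t] stretch_diff_ge[of t ?t'] assms by (cases "?t' \<le> t") auto
qed

lemma unstretch_lipschitz:
  assumes "0 \<le> s" "0 \<le> s'"
  shows "\<bar>unstretch S Y0 s - unstretch S Y0 s'\<bar> \<le> \<bar>s - s'\<bar>"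
  using stretch_unstretch[OF assms(1)] stretch_unstretch[OF assms(2)]
    stretch_diff_ge[of "unstretch S Y0 s" "unstretch S Y0 s'"]
    stretch_diff_ge[of "unstretch S Y0 s'" "unstretch S Y0 s"]
  by (cases "unstretch S Y0 s \<le> unstretch S Y0 s'") auto

lemma cext_strict_graph: "cext T (\<lambda>t. (x t, N t)) t = (x (clamp T t), stretch T N t - t)"
  by (simp add: cext_eq_clamp stretch_def)

lemma cext_st_graph:
  assumes "0 \<le> s"
  shows "cext S (\<lambda>s. (y s, s - Y0 s)) s = (x (clamp T (unstretch S Y0 s)), s - unstretch S Y0 s)"
proof (cases "s \<le> S")
  case True
  then show ?thesis
    using Y0_inv[of s] y_eq[of s] assms by (simp add: unstretch_def cext_eq_clamp clamp_id)
next
  case False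
  then show ?thesis
    using unstretch_beyond[of s] y_eq[of S] Y0_S T_le_S T_pos
    by (simp add: cext_eq_clamp clamp_def)
qed

lemma continuous_on_strict_graph: "continuous_on {0..T} (\<lambda>t. (x t, N t))"
  by (intro continuous_on_Pair x_cont N_cont)

lemma continuous_on_st_graph: "continuous_on {0..S} (\<lambda>s. (y s, s - Y0 s))"
proof -
  have "continuous_on {0..S} (unstretch S Y0)"
    unfolding continuous_on_iff
    using unstretch_lipschitz by (metis atLeastAtMost_iff dist_real_def le_less_trans)
  then have Y0: "continuous_on {0..S} Y0"
    by (rule continuous_on_cong[THEN iffD1, rotated 2]) (auto simp: unstretch_def clamp_id)
  have "continuous_on {0..S} (x \<circ> Y0)"
    by (rule continuous_on_compose[OF Y0 continuous_on_subset[OF x_cont]]) (use Y0_inv in auto)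
  then have "continuous_on {0..S} y"
    by (rule continuous_on_cong[THEN iffD1, rotated 2]) (simp_all add: y_eq)
  then show ?thesis by (intro continuous_on_Pair continuous_intros Y0)
qed

end

lemma cext_bounded:
  fixes z :: "real \<Rightarrow> 'a::real_normed_vector"
  assumes "continuous_on {0..D} z" "0 \<le> D"
  obtains C where "\<And>t. norm (cext D z t) \<le> C"
proof -
  have "compact (z ` {0..D})" by (rule compact_continuous_image[OF assms(1)]) auto
  then obtain C where "\<forall>v\<in>z ` {0..D}. norm v \<le> C" using compact_imp_bounded bounded_iff by metis
  then have "norm (cext D z t) \<le> C" for t using clamp_in[OF assms(2)] by (simp add: cext_eq_clamp)
  then show ?thesis using that by blast
qed

lemma dproc_cong:
  assumes "0 \<le> D1" "0 \<le> D2" "\<And>t. t \<in> {0..D1} \<Longrightarrow> z1 t = z1' t" "\<And>t. t \<in> {0..D2} \<Longrightarrow> z2 t = z2' t"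
  shows "dproc a D1 z1 b D2 z2 = dproc a D1 z1' b D2 z2'"
  unfolding dproc_def cext_eq_clamp using assms clamp_in[OF assms(1)] clamp_in[OF assms(2)] by simp

text \<open>\<open>dproc\<close> is built from the real \<open>SUP\<close>, which carries no information on unbounded sets;
  continuity of the two graphs is what makes it a genuine supremum.\<close>

lemma dproc_less_D:
  fixes z1 z2 :: "real \<Rightarrow> 'a::real_normed_vector"
  assumes d: "dproc a D1 z1 b D2 z2 < \<delta>"
    and "continuous_on {0..D1} z1" "0 \<le> D1" "continuous_on {0..D2} z2" "0 \<le> D2"
  shows "\<bar>a - b\<bar> < \<delta>" and "\<And>t. 0 \<le> t \<Longrightarrow> norm (cext D1 z1 t - cext D2 z2 t) < \<delta>"
proof -
  obtain C1 C2 where "\<And>t. norm (cext D1 z1 t) \<le> C1" "\<And>t. norm (cext D2 z2 t) \<le> C2"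
    using cext_bounded assms(2-5) by metis
  then have "bdd_above ((\<lambda>t. norm (cext D1 z1 t - cext D2 z2 t)) ` {0..})"
    by (intro bdd_aboveI[of _ "C1 + C2"]) (auto intro: order.trans[OF norm_triangle_ineq4] add_mono)
  then have le: "norm (cext D1 z1 t - cext D2 z2 t) \<le> (SUP t\<in>{0..}. norm (cext D1 z1 t - cext D2 z2 t))"
    if "0 \<le> t" for t
    using that by (intro cSUP_upper) auto
  show "\<bar>a - b\<bar> < \<delta>"
    using le[of 0] norm_ge_zero[of "cext D1 z1 0 - cext D2 z2 0"] d unfolding dproc_def by linarith
  show "norm (cext D1 z1 t - cext D2 z2 t) < \<delta>" if "0 \<le> t" for t
    using le[OF that] d by (simp add: dproc_def)
qed

lemma dproc_less_I:
  fixes z1 z2 :: "real \<Rightarrow> 'a::real_normed_vector"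
  assumes "\<bar>a - b\<bar> < e1" "\<And>t. 0 \<le> t \<Longrightarrow> norm (cext D1 z1 t - cext D2 z2 t) \<le> e2"
  shows "dproc a D1 z1 b D2 z2 < e1 + e2"
  using cSUP_least[of "{0..}" "\<lambda>t. norm (cext D1 z1 t - cext D2 z2 t)" e2] assms
  by (simp add: dproc_def)

lemma uniformly_continuous_clamp_ext:
  fixes z :: "real \<Rightarrow> 'a::real_normed_vector"
  assumes "continuous_on {0..D} z" "0 \<le> D" "0 < e"
  obtains d where "0 < d" "\<And>a b. \<bar>a - b\<bar> < d \<Longrightarrow> norm (z (clamp D a) - z (clamp D b)) < e"
proof -
  have "uniformly_continuous_on {0..D} z" by (rule compact_uniformly_continuous[OF assms(1)]) auto
  then obtain d where "0 < d" "\<And>p q. p \<in> {0..D} \<Longrightarrow> q \<in> {0..D} \<Longrightarrow> dist q p < d \<Longrightarrow> dist (z q) (z p) < e"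
    using assms(3) unfolding uniformly_continuous_on_def by metis
  moreover have "dist (clamp D a) (clamp D b) < d" if "\<bar>a - b\<bar> < d" for a b
    using clamp_lipschitz[of D a b] that by (simp add: dist_real_def)
  ultimately show ?thesis
    using that clamp_in[OF assms(2)] by (metis dist_norm)
qed

lemma norm_prod_diff_less_D:
  fixes p q :: "'a::real_normed_vector \<times> 'b::real_normed_vector"
  assumes "norm (p - q) < d"
  shows "norm (fst p - fst q) < d" "norm (snd p - snd q) < d"
proof -
  have "p - q = (fst p - fst q, snd p - snd q)" by (simp add: prod_eq_iff)
  then show "norm (fst p - fst q) < d" "norm (snd p - snd q) < d"
    using norm_fst_le[of "fst p - fst q" "snd p - snd q"] norm_snd_le[of "snd p - snd q" "fst p - fst q"] assms
    by auto
qed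

lemma norm_Pair_diff_le:
  fixes a b :: "'a::real_normed_vector" and c :: "'a" and r :: real
  shows "norm (a - b, r) \<le> norm (a - c) + norm (c - b) + \<bar>r\<bar>"
  using norm_Pair_le[of "a - b" r] norm_triangle_ineq[of "a - c" "c - b"] by simp

lemma st_graph_close_if_strict_graph_close:
  fixes x xb :: "real \<Rightarrow> 'a::real_normed_vector"
  assumes r: "reparam T x N S y Y0" and rb: "reparam Tb xb Nb Sb yb Y0b"
    and xb_mod: "\<And>a b. \<bar>a - b\<bar> < \<eta> \<Longrightarrow> norm (xb (clamp Tb a) - xb (clamp Tb b)) < e"
    and x_close: "\<And>t. 0 \<le> t \<Longrightarrow> norm (x (clamp T t) - xb (clamp Tb t)) < e"
    and stretch_close: "\<And>t. 0 \<le> t \<Longrightarrow> \<bar>stretch T N t - stretch Tb Nb t\<bar> < min e \<eta>"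
    and s: "0 \<le> s"
  shows "norm (cext S (\<lambda>s. (y s, s - Y0 s)) s - cext Sb (\<lambda>s. (yb s, s - Y0b s)) s) < 3 * e"
proof -
  define t tb where "t = unstretch S Y0 s" and "tb = unstretch Sb Y0b s"
  have t: "0 \<le> t" "stretch T N t = s"
    using reparam.stretch_unstretch[OF r s] by (auto simp: t_def)
  have "0 \<le> stretch Tb Nb t" using reparam.stretch_ge[OF rb t(1)] t(1) by linarith
  then have "\<bar>t - tb\<bar> \<le> \<bar>stretch Tb Nb t - s\<bar>"
    using reparam.unstretch_lipschitz[OF rb _ s] reparam.unstretch_stretch[OF rb t(1)]
    by (metis tb_def)
  also have "\<dots> < min e \<eta>" using stretch_close[OF t(1)] t(2) by (simp add: abs_minus_commute)
  finally have ttb: "\<bar>t - tb\<bar> < min e \<eta>" .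
  have "norm (cext S (\<lambda>s. (y s, s - Y0 s)) s - cext Sb (\<lambda>s. (yb s, s - Y0b s)) s)
      = norm (x (clamp T t) - xb (clamp Tb tb), tb - t)"
    using reparam.cext_st_graph[OF r s] reparam.cext_st_graph[OF rb s] by (simp add: t_def tb_def)
  also have "\<dots> \<le> norm (x (clamp T t) - xb (clamp Tb t)) + norm (xb (clamp Tb t) - xb (clamp Tb tb)) + \<bar>tb - t\<bar>"
    by (rule norm_Pair_diff_le)
  also have "\<dots> < 3 * e"
    using x_close[OF t(1)] xb_mod[of t tb] ttb by (simp add: abs_minus_commute)
  finally show ?thesis .
qed

lemma strict_graph_close_if_st_graph_close:
  fixes x xb :: "real \<Rightarrow> 'a::real_normed_vector"
  assumes r: "reparam T x N S y Y0" and rb: "reparam Tb xb Nb Sb yb Y0b"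
    and Nb_mod: "\<And>a b. \<bar>a - b\<bar> < \<eta>1 \<Longrightarrow> \<bar>Nb (clamp Tb a) - Nb (clamp Tb b)\<bar> < e1"
    and xb_mod: "\<And>a b. \<bar>a - b\<bar> < \<eta>2 \<Longrightarrow> norm (xb (clamp Tb a) - xb (clamp Tb b)) < e"
    and x_close: "\<And>s. 0 \<le> s \<Longrightarrow> norm (x (clamp T (unstretch S Y0 s)) - xb (clamp Tb (unstretch Sb Y0b s))) < \<delta>"
    and unstretch_close: "\<And>s. 0 \<le> s \<Longrightarrow> \<bar>unstretch Sb Y0b s - unstretch S Y0 s\<bar> < \<delta>"
    and \<delta>: "\<delta> \<le> \<eta>1" "\<delta> + e1 \<le> \<eta>2" and t: "0 \<le> t"
  shows "norm (cext T (\<lambda>t. (x t, N t)) t - cext Tb (\<lambda>t. (xb t, Nb t)) t) < 2 * \<delta> + e + e1"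
proof -
  define s sb ub where "s = stretch T N t" and "sb = stretch Tb Nb t" and "ub = unstretch Sb Y0b s"
  have s0: "0 \<le> s" "0 \<le> sb"
    using reparam.stretch_ge[OF r t] reparam.stretch_ge[OF rb t] t by (auto simp: s_def sb_def)
  have ub: "0 \<le> ub" "stretch Tb Nb ub = s"
    using reparam.stretch_unstretch[OF rb s0(1)] by (auto simp: ub_def)
  have us: "unstretch S Y0 s = t" "unstretch Sb Y0b sb = t"
    using reparam.unstretch_stretch[OF r t] reparam.unstretch_stretch[OF rb t] by (auto simp: s_def sb_def)
  have ubt: "\<bar>ub - t\<bar> < \<delta>" using unstretch_close[OF s0(1)] us by (simp add: ub_def)
  have "\<bar>s - sb\<bar> = \<bar>(ub - t) + (Nb (clamp Tb ub) - Nb (clamp Tb t))\<bar>"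
    using ub(2) by (simp add: sb_def stretch_def algebra_simps)
  also have "\<dots> < \<delta> + e1"
    using ubt Nb_mod[of ub t] \<delta>(1) by (intro order.strict_trans1[OF abs_triangle_ineq]) auto
  finally have ssb: "\<bar>s - sb\<bar> < \<delta> + e1" .
  have "\<bar>ub - t\<bar> \<le> \<bar>s - sb\<bar>"
    using reparam.unstretch_lipschitz[OF rb s0] us(2) by (simp add: ub_def)
  then have xb_ub: "norm (xb (clamp Tb ub) - xb (clamp Tb t)) < e"
    using xb_mod ssb \<delta>(2) by simp
  have "norm (cext T (\<lambda>t. (x t, N t)) t - cext Tb (\<lambda>t. (xb t, Nb t)) t)
      = norm (x (clamp T t) - xb (clamp Tb t), s - sb)"
    by (simp add: reparam.cext_strict_graph[OF r] reparam.cext_strict_graph[OF rb] s_def sb_def)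
  also have "\<dots> \<le> norm (x (clamp T t) - xb (clamp Tb ub)) + norm (xb (clamp Tb ub) - xb (clamp Tb t)) + \<bar>s - sb\<bar>"
    by (rule norm_Pair_diff_le)
  also have "\<dots> < 2 * \<delta> + e + e1"
    using x_close[OF s0(1)] xb_ub ssb us(1) by (simp add: ub_def)
  finally show ?thesis .
qed

lemma st_dist_small_if_strict_dist_small:
  fixes xb :: "real \<Rightarrow> 'a::real_normed_vector"
  assumes rb: "reparam Tb xb Nb Sb yb Y0b" and \<epsilon>: "0 < \<epsilon>"
  obtains \<delta> where "0 < \<delta>"
    "\<And>T x N S y Y0. reparam T x N S y Y0 \<Longrightarrow>
       dproc T T (\<lambda>t. (x t, N t)) Tb Tb (\<lambda>t. (xb t, Nb t)) < \<delta> \<Longrightarrow>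
       dproc T S (\<lambda>s. (y s, s - Y0 s)) Tb Sb (\<lambda>s. (yb s, s - Y0b s)) < \<epsilon>"
proof -
  have Tb: "0 \<le> Tb" using reparam.T_pos[OF rb] by simp
  obtain \<eta> where \<eta>: "0 < \<eta>" "\<And>a b. \<bar>a - b\<bar> < \<eta> \<Longrightarrow> norm (xb (clamp Tb a) - xb (clamp Tb b)) < \<epsilon>/4"
    using uniformly_continuous_clamp_ext[OF reparam.x_cont[OF rb] Tb, of "\<epsilon>/4"] \<epsilon> by auto
  define \<delta> where "\<delta> = min (\<epsilon>/4) \<eta>"
  show ?thesis
  proof (rule that[of \<delta>])
    show "0 < \<delta>" using \<epsilon> \<eta> by (simp add: \<delta>_def)
    fix T x N S y Y0
    assume r: "reparam T x N S y Y0"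
      and d: "dproc T T (\<lambda>t. (x t, N t)) Tb Tb (\<lambda>t. (xb t, Nb t)) < \<delta>"
    note close = dproc_less_D[OF d reparam.continuous_on_strict_graph[OF r] _
        reparam.continuous_on_strict_graph[OF rb] Tb]
    have x_close: "norm (x (clamp T t) - xb (clamp Tb t)) < \<epsilon>/4"
      and stretch_close: "\<bar>stretch T N t - stretch Tb Nb t\<bar> < min (\<epsilon>/4) \<eta>" if "0 \<le> t" for t
      using norm_prod_diff_less_D[OF close(2)[OF _ that]] reparam.T_pos[OF r]
      by (simp_all add: reparam.cext_strict_graph[OF r] reparam.cext_strict_graph[OF rb] \<delta>_def)
    have "norm (cext S (\<lambda>s. (y s, s - Y0 s)) s - cext Sb (\<lambda>s. (yb s, s - Y0b s)) s) \<le> 3 * (\<epsilon>/4)"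
      if "0 \<le> s" for s
      using st_graph_close_if_strict_graph_close[OF r rb \<eta>(2) x_close stretch_close that] by simp
    then have "dproc T S (\<lambda>s. (y s, s - Y0 s)) Tb Sb (\<lambda>s. (yb s, s - Y0b s)) < \<epsilon>/4 + 3 * (\<epsilon>/4)"
      using close(1) reparam.T_pos[OF r] by (intro dproc_less_I) (auto simp: \<delta>_def)
    then show "dproc T S (\<lambda>s. (y s, s - Y0 s)) Tb Sb (\<lambda>s. (yb s, s - Y0b s)) < \<epsilon>" by simp
  qed
qed

lemma strict_dist_small_if_st_dist_small:
  fixes xb :: "real \<Rightarrow> 'a::real_normed_vector"
  assumes rb: "reparam Tb xb Nb Sb yb Y0b" and \<epsilon>: "0 < \<epsilon>"
  obtains \<delta> where "0 < \<delta>"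
    "\<And>T x N S y Y0. reparam T x N S y Y0 \<Longrightarrow>
       dproc T S (\<lambda>s. (y s, s - Y0 s)) Tb Sb (\<lambda>s. (yb s, s - Y0b s)) < \<delta> \<Longrightarrow>
       dproc T T (\<lambda>t. (x t, N t)) Tb Tb (\<lambda>t. (xb t, Nb t)) < \<epsilon>"
proof -
  have Tb: "0 \<le> Tb" and Sb: "0 \<le> Sb" using reparam.T_pos[OF rb] reparam.T_le_S[OF rb] by auto
  obtain \<eta>2 where \<eta>2: "0 < \<eta>2" "\<And>a b. \<bar>a - b\<bar> < \<eta>2 \<Longrightarrow> norm (xb (clamp Tb a) - xb (clamp Tb b)) < \<epsilon>/4"
    using uniformly_continuous_clamp_ext[OF reparam.x_cont[OF rb] Tb, of "\<epsilon>/4"] \<epsilon> by auto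
  define e1 where "e1 = min (\<epsilon>/8) (\<eta>2/2)"
  have e1: "0 < e1" using \<epsilon> \<eta>2 by (simp add: e1_def)
  obtain \<eta>1 where \<eta>1: "0 < \<eta>1" "\<And>a b. \<bar>a - b\<bar> < \<eta>1 \<Longrightarrow> norm (Nb (clamp Tb a) - Nb (clamp Tb b)) < e1"
    using uniformly_continuous_clamp_ext[OF reparam.N_cont[OF rb] Tb e1] by auto
  define \<delta> where "\<delta> = min e1 \<eta>1"
  show ?thesis
  proof (rule that[of \<delta>])
    show "0 < \<delta>" using e1 \<eta>1 by (simp add: \<delta>_def)
    fix T x N S y Y0
    assume r: "reparam T x N S y Y0"
      and d: "dproc T S (\<lambda>s. (y s, s - Y0 s)) Tb Sb (\<lambda>s. (yb s, s - Y0b s)) < \<delta>"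
    have S: "0 \<le> S" using reparam.T_pos[OF r] reparam.T_le_S[OF r] by simp
    note close = dproc_less_D[OF d reparam.continuous_on_st_graph[OF r] S
        reparam.continuous_on_st_graph[OF rb] Sb]
    have x_close: "norm (x (clamp T (unstretch S Y0 s)) - xb (clamp Tb (unstretch Sb Y0b s))) < \<delta>"
      and unstretch_close: "\<bar>unstretch Sb Y0b s - unstretch S Y0 s\<bar> < \<delta>" if "0 \<le> s" for s
      using norm_prod_diff_less_D[OF close(2)[OF that]]
      by (simp_all add: reparam.cext_st_graph[OF r that] reparam.cext_st_graph[OF rb that])
    have \<delta>_le: "\<delta> \<le> \<eta>1" "\<delta> + e1 \<le> \<eta>2" by (auto simp: \<delta>_def e1_def)
    have graph_close: "norm (cext T (\<lambda>t. (x t, N t)) t - cext Tb (\<lambda>t. (xb t, Nb t)) t) < 2 * \<delta> + \<epsilon>/4 + e1"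
      if "0 \<le> t" for t
      using strict_graph_close_if_st_graph_close[OF r rb _ \<eta>2(2) x_close unstretch_close \<delta>_le that]
        \<eta>1(2) by simp
    have small: "\<delta> \<le> \<epsilon>/8" "e1 \<le> \<epsilon>/8" by (auto simp: \<delta>_def e1_def)
    then have "norm (cext T (\<lambda>t. (x t, N t)) t - cext Tb (\<lambda>t. (xb t, Nb t)) t) \<le> 3 * (\<epsilon>/4)"
      if "0 \<le> t" for t
      using graph_close[OF that] \<epsilon> by linarith
    moreover have "\<bar>T - Tb\<bar> < \<epsilon>/4" using close(1) small \<epsilon> by linarith
    ultimately have "dproc T T (\<lambda>t. (x t, N t)) Tb Tb (\<lambda>t. (xb t, Nb t)) < \<epsilon>/4 + 3 * (\<epsilon>/4)"
      by (intro dproc_less_I)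
    then show "dproc T T (\<lambda>t. (x t, N t)) Tb Tb (\<lambda>t. (xb t, Nb t)) < \<epsilon>" by simp
  qed
qed

section \<open>Transfer between strict sense and space-time processes\<close>

context space_time_control
begin

lemma reparam_clock:
  assumes "continuous_on {0..horizon} x" and Y0: "\<And>s. s \<in> {0..S} \<Longrightarrow> Y0 s = clock s"
    and "\<And>s. s \<in> {0..S} \<Longrightarrow> y s = x (clock s)"
    and N: "\<And>t. t \<in> {0..horizon} \<Longrightarrow> N t = clock_inv t - t"
  shows "reparam horizon x N S y Y0"
proof
  show "continuous_on {0..horizon} N"
    using continuous_on_subset[OF clock_inv_continuous] N
    by (subst continuous_on_cong[OF refl N]) (auto intro!: continuous_intros)
  show "N a \<le> N b" if "0 \<le> a" "a \<le> b" "b \<le> horizon" for a b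
    using clock_diff_le[OF _ clock_inv_mono[OF that(2)]] clock_inv_in[of a]
      clock_clock_inv[of a] clock_clock_inv[of b] N[of a] N[of b] that by auto
  show "N 0 = 0" using N[of 0] clock_inv_clock[of 0] S_pos horizon_pos by simp
  show "S = horizon + N horizon" using N[of horizon] horizon_pos by simp
  show "Y0 s \<in> {0..horizon} \<and> Y0 s + N (Y0 s) = s" if "s \<in> {0..S}" for s
    using clock_in[OF that] N[OF clock_in[OF that]] clock_inv_clock[OF that] Y0[OF that] by simp
qed (use assms horizon_pos in auto)

lemma lift_strict_process:
  assumes N: "negligible N" "\<And>t. t \<in> {0..horizon} - N \<Longrightarrow> u t = ctrl t"
    and us: "unique_carath_sol (\<lambda>t z. ctrl_dyn f g (u t) z) x0 horizon x"
    and Y0_eq: "\<And>s. s \<in> {0..S} \<Longrightarrow> Y0 s = clock s"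
  shows "unique_carath_sol (\<lambda>s yy. st_dyn f g (w0 s) (w s) yy) (0, x0) S (\<lambda>s. (Y0 s, x (Y0 s)))"
    and "reparam horizon x (nu u) S (\<lambda>s. x (Y0 s)) Y0"
proof -
  have "unique_carath_sol (\<lambda>t z. ctrl_dyn f g (u t) z) x0 horizon x
      \<longleftrightarrow> unique_carath_sol (\<lambda>t z. ctrl_dyn f g (ctrl t) z) x0 horizon x"
    by (rule unique_carath_sol_cong[OF N(1)]) (simp add: N(2))
  with us have "unique_carath_sol (\<lambda>t z. ctrl_dyn f g (ctrl t) z) x0 horizon x" by simp
  then have "unique_carath_sol (\<lambda>s yy. st_dyn f g (w0 s) (w s) yy) (0, x0) S (\<lambda>s. (clock s, x (clock s)))"
    by (rule unique_st_sol_if_unique_ctrl_sol)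
  moreover have "unique_carath_sol (\<lambda>s yy. st_dyn f g (w0 s) (w s) yy) (0, x0) S (\<lambda>s. (clock s, x (clock s)))
      \<longleftrightarrow> unique_carath_sol (\<lambda>s yy. st_dyn f g (w0 s) (w s) yy) (0, x0) S (\<lambda>s. (Y0 s, x (Y0 s)))"
    by (rule unique_carath_sol_cong_sol) (simp add: Y0_eq)
  ultimately show "unique_carath_sol (\<lambda>s yy. st_dyn f g (w0 s) (w s) yy) (0, x0) S (\<lambda>s. (Y0 s, x (Y0 s)))"
    by simp
  have x: "continuous_on {0..horizon} x"
    using us carath_sol_continuous unfolding unique_carath_sol_def by blast
  have N_eq: "nu u t = clock_inv t - t" if "t \<in> {0..horizon}" for t
  proof -
    have "nu u t = nu ctrl t"
      unfolding nu_def by (rule integral_spike[OF N(1)]) (use that N(2) in auto)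
    then show ?thesis using nu_ctrl[OF that] by simp
  qed
  show "reparam horizon x (nu u) S (\<lambda>s. x (Y0 s)) Y0"
    by (rule reparam_clock[OF x Y0_eq _ N_eq]) (use Y0_eq in auto)
qed

lemma st_process_if_ae_eq:
  assumes E: "negligible E" "\<And>s. s \<in> {0..S} - E \<Longrightarrow> w0' s = w0 s \<and> w' s = w s"
    and "unique_carath_sol (\<lambda>s yy. st_dyn f g (w0 s) (w s) yy) (0, x0) S (\<lambda>s. (y0 s, y s))"
  shows "st_process f g x0 S w0' w' y0 y"
  unfolding st_process_def
proof (intro conjI)
  show "w0' \<in> borel_measurable (lebesgue_on {0..S})"
    by (rule borel_measurable_lebesgue_on_spike[OF w0_borel E(1)]) (use E(2) in auto)
  show "w' \<in> borel_measurable (lebesgue_on {0..S})"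
    by (rule borel_measurable_lebesgue_on_spike[OF w_borel E(1)]) (use E(2) in auto)
  have "AE s in lebesgue. s \<notin> E"
    using E(1) by (simp add: negligible_iff_null_sets AE_not_in)
  then have "AE s in lebesgue. s \<in> {0..S} \<longrightarrow> 0 \<le> w0' s \<and> w0' s + norm (w' s) = 1"
    by eventually_elim (use E(2) w0_pos w0_norm_w in \<open>auto simp: less_imp_le\<close>)
  then show "AE s in lebesgue_on {0..S}. 0 \<le> w0' s \<and> w0' s + norm (w' s) = 1"
    by (subst AE_restrict_space_iff) auto
  show "unique_carath_sol (\<lambda>s yy. st_dyn f g (w0' s) (w' s) yy) (0, x0) S (\<lambda>s. (y0 s, y s))"
    using assms(3) unique_carath_sol_cong[OF E(1), of S "\<lambda>s yy. st_dyn f g (w0' s) (w' s) yy"] E(2)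
    by simp
qed (rule S_pos)

lemma clock_eq_primitive_inv:
  assumes \<rho>: "\<rho> \<in> borel_measurable borel" "\<And>t. 0 < \<rho> t" "\<rho> integrable_on {0..T}" "0 \<le> T"
    and w0_eq: "\<And>s. w0 s = inverse (\<rho> (primitive_inv \<rho> T s))" and S_eq: "S = integral {0..T} \<rho>"
  shows "\<And>s. s \<in> {0..S} \<Longrightarrow> clock s = primitive_inv \<rho> T s"
    and "horizon = T"
    and "\<And>t. t \<in> {0..T} \<Longrightarrow> clock_inv t = integral {0..t} \<rho>"
proof -
  have "w0 = (\<lambda>s. inverse (\<rho> (primitive_inv \<rho> T s)))" using w0_eq by (simp add: fun_eq_iff)
  then show clock: "clock s = primitive_inv \<rho> T s" if "s \<in> {0..S}" for s
    using integral_inverse_density[OF \<rho>] that S_eq unfolding clock_def by simp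
  have "horizon = primitive_inv \<rho> T S" using clock[of S] S_pos by simp
  also have "\<dots> = T" using primitive_inv_primitive[OF \<rho>, of T] \<rho>(4) by (simp add: S_eq)
  finally show "horizon = T" .
  show "clock_inv t = integral {0..t} \<rho>" if "t \<in> {0..T}" for t
  proof -
    have mem: "integral {0..t} \<rho> \<in> {0..S}"
      using primitive_bij_betw[OF \<rho>] that unfolding S_eq bij_betw_def by blast
    have "clock (integral {0..t} \<rho>) = t"
      using clock[OF mem] primitive_inv_primitive[OF \<rho> that] by simp
    then show ?thesis using clock_inv_clock[OF mem] by simp
  qed
qed

end

lemma st_controls_borel_representative:
  fixes w0 :: "real \<Rightarrow> real" and w :: "real \<Rightarrow> 'a::euclidean_space"
  assumes "w0 \<in> borel_measurable (lebesgue_on {0..S})" "w \<in> borel_measurable (lebesgue_on {0..S})"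
    and "AE s in lebesgue_on {0..S}. 0 < w0 s \<and> w0 s + norm (w s) = 1"
  obtains v0 v N where "v0 \<in> borel_measurable borel" "v \<in> borel_measurable borel"
    "\<And>s. 0 < v0 s" "\<And>s. v0 s + norm (v s) = 1" "negligible N"
    "\<And>s. s \<in> {0..S} - N \<Longrightarrow> w0 s = v0 s \<and> w s = v s"
proof -
  obtain N1 where N1: "negligible N1" "\<And>s. s \<in> {0..S} - N1 \<Longrightarrow> 0 < w0 s \<and> w0 s + norm (w s) = 1"
    using AE_lebesgue_on_imp_negligible_exception[OF assms(3)] by auto
  obtain w0' N2 where [measurable]: "w0' \<in> borel_measurable borel"
    and N2: "negligible N2" "\<And>s. s \<in> {0..S} - N2 \<Longrightarrow> w0 s = w0' s"
    by (rule borel_measurable_representative[OF assms(1)]) auto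
  obtain w' N3 where [measurable]: "w' \<in> borel_measurable borel"
    and N3: "negligible N3" "\<And>s. s \<in> {0..S} - N3 \<Longrightarrow> w s = w' s"
    by (rule borel_measurable_representative[OF assms(2)]) auto
  define good where "good s \<longleftrightarrow> 0 < w0' s \<and> w0' s + norm (w' s) = 1" for s
  have [measurable]: "Measurable.pred borel good" unfolding good_def by measurable
  show ?thesis
  proof (rule that[of "\<lambda>s. if good s then w0' s else 1" "\<lambda>s. if good s then w' s else 0" "N1 \<union> N2 \<union> N3"])
    fix s assume "s \<in> {0..S} - (N1 \<union> N2 \<union> N3)"
    then have "0 < w0 s \<and> w0 s + norm (w s) = 1" "w0 s = w0' s" "w s = w' s"
      using N1(2)[of s] N2(2)[of s] N3(2)[of s] by auto
    then show "w0 s = (if good s then w0' s else 1) \<and> w s = (if good s then w' s else 0)"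
      by (simp add: good_def)
  qed (use N1(1) N2(1) N3(1) in \<open>auto simp: good_def\<close>)
qed

lemma strict_process_of_st_process:
  fixes f :: "real^'n \<Rightarrow> real^'n" and g :: "'m::finite \<Rightarrow> real^'n \<Rightarrow> real^'n"
  assumes fc: "continuous_on UNIV f" and gc: "\<And>i. continuous_on UNIV (g i)"
    and stp: "st_process f g x0 S w0 w y0 y" and pos: "AE s in lebesgue_on {0..S}. 0 < w0 s"
  obtains u x where "strict_process f g x0 (y0 S) u x" "x (y0 S) = y S"
    "reparam (y0 S) x (nu u) S y y0" "\<And>s. s \<in> {0..S} \<Longrightarrow> nu w s = s - y0 s"
proof -
  have S: "0 < S" and us: "unique_carath_sol (\<lambda>s yy. st_dyn f g (w0 s) (w s) yy) (0, x0) S (\<lambda>s. (y0 s, y s))"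
    using stp by (auto simp: st_process_def)
  have m: "w0 \<in> borel_measurable (lebesgue_on {0..S})" "w \<in> borel_measurable (lebesgue_on {0..S})"
    and ae: "AE s in lebesgue_on {0..S}. 0 \<le> w0 s \<and> w0 s + norm (w s) = 1"
    using stp by (simp_all add: st_process_def)
  from pos ae have "AE s in lebesgue_on {0..S}. 0 < w0 s \<and> w0 s + norm (w s) = 1"
    by eventually_elim auto
  then obtain v0 v N where v: "v0 \<in> borel_measurable borel" "v \<in> borel_measurable borel"
    "\<And>s. 0 < v0 s" "\<And>s. v0 s + norm (v s) = 1"
    and N: "negligible N" "\<And>s. s \<in> {0..S} - N \<Longrightarrow> w0 s = v0 s \<and> w s = v s"
    by (rule st_controls_borel_representative[OF m]) blast+
  interpret space_time_control f g v0 v S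
    by unfold_locales (use fc gc v S in auto)
  have "unique_carath_sol (\<lambda>s yy. st_dyn f g (w0 s) (w s) yy) (0, x0) S (\<lambda>s. (y0 s, y s))
      \<longleftrightarrow> unique_carath_sol (\<lambda>s yy. st_dyn f g (v0 s) (v s) yy) (0, x0) S (\<lambda>s. (y0 s, y s))"
    by (rule unique_carath_sol_cong[OF N(1)]) (simp add: N(2))
  with us have "unique_carath_sol (\<lambda>s yy. st_dyn f g (v0 s) (v s) yy) (0, x0) S (\<lambda>s. (y0 s, y s))"
    by simp
  note y0_clock = unique_ctrl_sol_if_unique_st_sol(1)[OF this]
    and x_unique = unique_ctrl_sol_if_unique_st_sol(2)[OF this]
  have T: "y0 S = horizon" using y0_clock S by simp
  show ?thesis
  proof (rule that[of ctrl "\<lambda>t. y (clock_inv t)"])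
    show "strict_process f g x0 (y0 S) ctrl (\<lambda>t. y (clock_inv t))"
      using x_unique horizon_pos ctrl_absolutely_integrable T by (simp add: strict_process_def)
    show "y (clock_inv (y0 S)) = y S" using T by simp
    have "continuous_on {0..horizon} (\<lambda>t. y (clock_inv t))"
      using x_unique carath_sol_continuous unfolding unique_carath_sol_def by blast
    then show "reparam (y0 S) (\<lambda>t. y (clock_inv t)) (nu ctrl) S y y0"
      unfolding T by (rule reparam_clock) (use y0_clock clock_inv_clock nu_ctrl in auto)
    show "nu w s = s - y0 s" if "s \<in> {0..S}" for s
      using integral_spike[OF N(1), of "{0..s}" "\<lambda>t. norm (v t)" "\<lambda>t. norm (w t)"] N(2) that
        nu_w y0_clock by (auto simp: nu_def)
  qed
qed

lemma sigma_I_eq_primitive: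
  fixes u u' :: "real \<Rightarrow> 'a::real_normed_vector"
  assumes "negligible N" "\<And>t. t \<in> {0..T} - N \<Longrightarrow> u t = u' t" and "0 \<le> T"
  shows "\<And>t. t \<in> {0..T} \<Longrightarrow> sigma_I u t = integral {0..t} (\<lambda>t. 1 + norm (u' t))"
    and "\<And>s. s \<in> {0..sigma_I u T} \<Longrightarrow>
           inv_into {0..T} (sigma_I u) s = primitive_inv (\<lambda>t. 1 + norm (u' t)) T s"
proof -
  show \<sigma>: "sigma_I u t = integral {0..t} (\<lambda>t. 1 + norm (u' t))" if "t \<in> {0..T}" for t
    unfolding sigma_I_def by (rule integral_spike[OF assms(1)]) (use assms(2) that in auto)
  show "inv_into {0..T} (sigma_I u) s = primitive_inv (\<lambda>t. 1 + norm (u' t)) T s"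
    if "s \<in> {0..sigma_I u T}" for s
    using inv_into_cong[of "{0..T}", OF \<sigma>] that \<sigma>[of T] assms(3)
    by (auto simp: primitive_inv_def clamp_id)
qed

lemma one_plus_norm_density:
  fixes u :: "real \<Rightarrow> 'a::euclidean_space"
  assumes "u \<in> borel_measurable borel" and "u absolutely_integrable_on {0..T}"
  shows "(\<lambda>t. 1 + norm (u t)) \<in> borel_measurable borel" "\<And>t. 0 < 1 + norm (u t)"
    and "(\<lambda>t. 1 + norm (u t)) integrable_on {0..T}"
proof -
  show "(\<lambda>t. 1 + norm (u t)) \<in> borel_measurable borel" using assms(1) by measurable
  show "\<And>t. 0 < 1 + norm (u t)" by (simp add: add_pos_nonneg)
  have "(\<lambda>t. norm (u t)) integrable_on {0..T}"
    using assms(2) by (rule absolutely_integrable_on_def[THEN iffD1, THEN conjunct2])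
  then show "(\<lambda>t. 1 + norm (u t)) integrable_on {0..T}"
    by (intro integrable_add integrable_on_const) auto
qed

lemma space_time_control_of_strict_control:
  fixes f :: "real^'n \<Rightarrow> real^'n" and g :: "'m::finite \<Rightarrow> real^'n \<Rightarrow> real^'n"
    and u :: "real \<Rightarrow> real^'m"
  assumes fc: "continuous_on UNIV f" and gc: "\<And>i. continuous_on UNIV (g i)"
    and [measurable]: "u \<in> borel_measurable borel" and ua: "u absolutely_integrable_on {0..T}"
    and T: "0 < T" and \<rho>_def: "\<rho> = (\<lambda>t. 1 + norm (u t))"
    and v0_def: "v0 = (\<lambda>s. inverse (\<rho> (primitive_inv \<rho> T s)))"
    and v_def: "v = (\<lambda>s. v0 s *\<^sub>R u (primitive_inv \<rho> T s))"
  shows "space_time_control f g v0 v (integral {0..T} \<rho>)"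
    and "space_time_control.horizon v0 (integral {0..T} \<rho>) = T"
    and "\<And>s. s \<in> {0..integral {0..T} \<rho>} \<Longrightarrow> space_time_control.clock v0 s = primitive_inv \<rho> T s"
    and "\<And>t. t \<in> {0..T} \<Longrightarrow> space_time_control.ctrl v0 v (integral {0..T} \<rho>) t = u t"
proof -
  have \<rho>_borel [measurable]: "\<rho> \<in> borel_measurable borel" and \<rho>_pos: "\<And>t. 0 < \<rho> t"
    and \<rho>_int: "\<rho> integrable_on {0..T}"
    using one_plus_norm_density[OF _ ua] by (simp_all add: \<rho>_def)
  have [measurable]: "primitive_inv \<rho> T \<in> borel_measurable borel"
    using continuous_primitive_inv[OF \<rho>_borel \<rho>_pos \<rho>_int] T by (intro borel_measurable_continuous_onI) auto
  show stc: "space_time_control f g v0 v (integral {0..T} \<rho>)"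
  proof (unfold_locales)
    show "v0 \<in> borel_measurable borel" "v \<in> borel_measurable borel"
      unfolding v0_def v_def by measurable
    show "0 < v0 s" for s using \<rho>_pos by (simp add: v0_def)
    show "v0 s + norm (v s) = 1" for s
      using \<rho>_pos[of "primitive_inv \<rho> T s"] by (simp add: v0_def v_def \<rho>_def field_simps)
    show "0 < integral {0..T} \<rho>"
      using primitive_strict_mono[OF \<rho>_borel \<rho>_pos \<rho>_int, of 0 T] T by simp
  qed (use fc gc in auto)
  interpret stc: space_time_control f g v0 v "integral {0..T} \<rho>" by (rule stc)
  note clock = stc.clock_eq_primitive_inv[OF \<rho>_borel \<rho>_pos \<rho>_int _ _ refl]
  show "space_time_control.horizon v0 (integral {0..T} \<rho>) = T"
    using clock(2) T by (simp add: v0_def)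
  show "space_time_control.clock v0 s = primitive_inv \<rho> T s" if "s \<in> {0..integral {0..T} \<rho>}" for s
    using clock(1) T that by (simp add: v0_def)
  show "space_time_control.ctrl v0 v (integral {0..T} \<rho>) t = u t" if "t \<in> {0..T}" for t
    using clock(3)[of t] T that primitive_inv_primitive[OF \<rho>_borel \<rho>_pos \<rho>_int less_imp_le[OF T] that] \<rho>_pos
    unfolding stc.ctrl_def by (simp add: v_def v0_def less_imp_neq[OF \<rho>_pos, symmetric])
qed

lemma st_process_of_strict_process:
  fixes f :: "real^'n \<Rightarrow> real^'n" and g :: "'m::finite \<Rightarrow> real^'n \<Rightarrow> real^'n"
    and u :: "real \<Rightarrow> real^'m"
  assumes fc: "continuous_on UNIV f" and gc: "\<And>i. continuous_on UNIV (g i)"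
    and sp: "strict_process f g x0 T u x"
  defines "Y \<equiv> inv_into {0..T} (sigma_I u)" and "S \<equiv> sigma_I u T"
  defines "w0 \<equiv> \<lambda>s. inverse (1 + norm (u (Y s)))"
  defines "w \<equiv> \<lambda>s. w0 s *\<^sub>R u (Y s)"
  shows "st_process f g x0 S w0 w Y (\<lambda>s. x (Y s))"
    and "reparam T x (nu u) S (\<lambda>s. x (Y s)) Y"
    and "\<And>s. s \<in> {0..S} \<Longrightarrow> nu w s = s - Y s"
proof -
  have T: "0 < T" and ua: "u absolutely_integrable_on {0..T}"
    and us: "unique_carath_sol (\<lambda>t z. ctrl_dyn f g (u t) z) x0 T x"
    using sp by (auto simp: strict_process_def)
  txt \<open>The controls \<open>w0, w\<close> built from \<open>u\<close> itself need not be Borel, so the argument runs with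
    a Borel representative \<open>u'\<close>; the set \<open>E\<close> where the two versions differ is null, being
    the image of a null set under the time change.\<close>
  have "u \<in> borel_measurable (lebesgue_on {0..T})"
    using ua absolutely_integrable_measurable[of "{0..T}" u] by simp
  then obtain u' N0 where u': "u' \<in> borel_measurable borel" "N0 \<in> sets borel"
    and N0: "negligible N0" "\<And>t. t \<in> {0..T} - N0 \<Longrightarrow> u t = u' t"
    by (rule borel_measurable_representative) auto
  have u'a: "u' absolutely_integrable_on {0..T}"
    by (rule absolutely_integrable_spike[OF ua N0(1)]) (use N0(2) in auto)
  define \<rho> where "\<rho> = (\<lambda>t. 1 + norm (u' t))"
  define v0 where "v0 = (\<lambda>s. inverse (\<rho> (primitive_inv \<rho> T s)))"
  define v where "v = (\<lambda>s. v0 s *\<^sub>R u' (primitive_inv \<rho> T s))"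
  note stc = space_time_control_of_strict_control[OF fc gc u'(1) u'a T \<rho>_def v0_def v_def]
  interpret space_time_control f g v0 v "integral {0..T} \<rho>" by (rule stc(1))
  note \<sigma> = sigma_I_eq_primitive[where u=u and u'=u', OF N0 less_imp_le[OF T]]
  have S_eq: "S = integral {0..T} \<rho>" using \<sigma>(1)[of T] T by (simp add: S_def \<rho>_def)
  have Y_eq: "Y s = clock s" if "s \<in> {0..S}" for s
    using \<sigma>(2)[of s] stc(3)[of s] that S_eq unfolding Y_def S_def \<rho>_def by simp
  have u_ctrl: "u t = ctrl t" if "t \<in> {0..horizon} - N0" for t using N0(2) stc(2,4) that by simp
  have "unique_carath_sol (\<lambda>t z. ctrl_dyn f g (u t) z) x0 horizon x" using us stc(2) by simp
  note lift = lift_strict_process[OF N0(1) u_ctrl this Y_eq[unfolded S_eq]]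
  define E where "E = {s \<in> {0..S}. primitive_inv \<rho> T s \<in> N0}"
  have \<rho>: "\<rho> \<in> borel_measurable borel" "\<And>t. 0 < \<rho> t" "\<rho> integrable_on {0..T}"
    using one_plus_norm_density[OF u'(1) u'a] by (simp_all add: \<rho>_def)
  have E: "negligible E"
    unfolding E_def S_eq by (rule negligible_primitive_inv_preimage[OF \<rho> _ u'(2) N0(1)]) (use T in simp)
  have off_E: "w0 s = v0 s \<and> w s = v s" if "s \<in> {0..S} - E" for s
  proof -
    have "Y s \<in> {0..T} - N0" "Y s = primitive_inv \<rho> T s"
      using that Y_eq stc(3) primitive_inv_in[OF \<rho>] T S_eq by (auto simp: E_def)
    then show ?thesis using N0(2) by (simp add: w0_def w_def v0_def v_def \<rho>_def)
  qed
  show "st_process f g x0 S w0 w Y (\<lambda>s. x (Y s))"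
    unfolding S_eq by (rule st_process_if_ae_eq[OF E _ lift(1)]) (use off_E S_eq in auto)
  show "reparam T x (nu u) S (\<lambda>s. x (Y s)) Y"
    using lift(2) stc(2) S_eq by simp
  show "nu w s = s - Y s" if "s \<in> {0..S}" for s
  proof -
    have "nu w s = nu v s"
      unfolding nu_def by (rule integral_spike[OF E]) (use that off_E in auto)
    then show ?thesis using nu_w Y_eq that by simp
  qed
qed

lemma st_local_min_if_strict_local_min:
  fixes f :: "real^'n \<Rightarrow> real^'n" and g :: "'m::finite \<Rightarrow> real^'n \<Rightarrow> real^'n"
    and wb :: "real \<Rightarrow> real^'m"
  assumes fc: "continuous_on UNIV f" and gc: "\<And>i. continuous_on UNIV (g i)"
    and min: "strict_Linf_local_min f g x0 \<TT> \<Psi> Tb ub xb"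
    and rb: "reparam Tb xb (nu ub) Sb yb Y0b" and nu_wb: "\<And>s. s \<in> {0..Sb} \<Longrightarrow> nu wb s = s - Y0b s"
  shows "\<exists>\<delta>'>0. \<forall>S w0 w y0 y.
           st_feasible f g x0 \<TT> S w0 w y0 y \<and> (AE s in lebesgue_on {0..S}. w0 s > 0) \<and>
           dproc (y0 S) S (\<lambda>s. (y s, nu w s)) (Y0b Sb) Sb (\<lambda>s. (yb s, nu wb s)) < \<delta>'
           \<longrightarrow> \<Psi> (Y0b Sb, yb Sb) \<le> \<Psi> (y0 S, y S)"
proof -
  obtain \<delta> where "0 < \<delta>" and min_\<delta>: "\<And>T u x. strict_feasible f g x0 \<TT> T u x \<Longrightarrow>
      dproc T T (\<lambda>t. (x t, nu u t)) Tb Tb (\<lambda>t. (xb t, nu ub t)) < \<delta> \<Longrightarrow> \<Psi> (Tb, xb Tb) \<le> \<Psi> (T, x T)"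
    using min unfolding strict_Linf_local_min_def by blast
  obtain \<delta>' where "0 < \<delta>'" and close: "\<And>T x N S y Y0. reparam T x N S y Y0 \<Longrightarrow>
      dproc T S (\<lambda>s. (y s, s - Y0 s)) Tb Sb (\<lambda>s. (yb s, s - Y0b s)) < \<delta>' \<Longrightarrow>
      dproc T T (\<lambda>t. (x t, N t)) Tb Tb (\<lambda>t. (xb t, nu ub t)) < \<delta>"
    using strict_dist_small_if_st_dist_small[OF rb \<open>0 < \<delta>\<close>] by blast
  note ref = reparam.Y0_S[OF rb] reparam.y_S[OF rb]
  show ?thesis
  proof (intro exI[of _ \<delta>'] conjI allI impI)
    fix S w0 w y0 y
    assume H: "st_feasible f g x0 \<TT> S w0 w y0 y \<and> (AE s in lebesgue_on {0..S}. w0 s > 0) \<and>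
        dproc (y0 S) S (\<lambda>s. (y s, nu w s)) (Y0b Sb) Sb (\<lambda>s. (yb s, nu wb s)) < \<delta>'"
    then have stp: "st_process f g x0 S w0 w y0 y" and pos: "AE s in lebesgue_on {0..S}. 0 < w0 s"
      by (simp_all add: st_feasible_def)
    obtain u x where sp: "strict_process f g x0 (y0 S) u x" and xS: "x (y0 S) = y S"
      and r: "reparam (y0 S) x (nu u) S y y0" and nu_w: "\<And>s. s \<in> {0..S} \<Longrightarrow> nu w s = s - y0 s"
      by (rule strict_process_of_st_process[OF fc gc stp pos]) blast+
    have "dproc (y0 S) S (\<lambda>s. (y s, nu w s)) (Y0b Sb) Sb (\<lambda>s. (yb s, nu wb s))
        = dproc (y0 S) S (\<lambda>s. (y s, s - y0 s)) Tb Sb (\<lambda>s. (yb s, s - Y0b s))"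
      unfolding ref(1)
      by (rule dproc_cong) (use nu_w nu_wb reparam.T_le_S[OF r] reparam.T_pos[OF r]
          reparam.T_le_S[OF rb] reparam.T_pos[OF rb] in auto)
    then have "dproc (y0 S) S (\<lambda>s. (y s, s - y0 s)) Tb Sb (\<lambda>s. (yb s, s - Y0b s)) < \<delta>'"
      using H by simp
    then have "\<Psi> (Tb, xb Tb) \<le> \<Psi> (y0 S, x (y0 S))"
      using min_\<delta>[of "y0 S" u x] close[OF r] sp H xS by (simp add: strict_feasible_def st_feasible_def)
    then show "\<Psi> (Y0b Sb, yb Sb) \<le> \<Psi> (y0 S, y S)" using ref xS by simp
  qed (rule \<open>0 < \<delta>'\<close>)
qed

lemma strict_local_min_if_st_local_min:
  fixes f :: "real^'n \<Rightarrow> real^'n" and g :: "'m::finite \<Rightarrow> real^'n \<Rightarrow> real^'n"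
    and wb :: "real \<Rightarrow> real^'m"
  assumes fc: "continuous_on UNIV f" and gc: "\<And>i. continuous_on UNIV (g i)"
    and feas: "strict_feasible f g x0 \<TT> Tb ub xb"
    and rb: "reparam Tb xb (nu ub) Sb yb Y0b" and nu_wb: "\<And>s. s \<in> {0..Sb} \<Longrightarrow> nu wb s = s - Y0b s"
    and min: "\<exists>\<delta>'>0. \<forall>S w0 w y0 y.
           st_feasible f g x0 \<TT> S w0 w y0 y \<and> (AE s in lebesgue_on {0..S}. w0 s > 0) \<and>
           dproc (y0 S) S (\<lambda>s. (y s, nu w s)) (Y0b Sb) Sb (\<lambda>s. (yb s, nu wb s)) < \<delta>'
           \<longrightarrow> \<Psi> (Y0b Sb, yb Sb) \<le> \<Psi> (y0 S, y S)"
  shows "strict_Linf_local_min f g x0 \<TT> \<Psi> Tb ub xb"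
proof -
  obtain \<delta>' where "0 < \<delta>'" and min_\<delta>': "\<And>S w0 w y0 y. st_feasible f g x0 \<TT> S w0 w y0 y \<Longrightarrow>
      AE s in lebesgue_on {0..S}. w0 s > 0 \<Longrightarrow>
      dproc (y0 S) S (\<lambda>s. (y s, nu w s)) (Y0b Sb) Sb (\<lambda>s. (yb s, nu wb s)) < \<delta>'
      \<Longrightarrow> \<Psi> (Y0b Sb, yb Sb) \<le> \<Psi> (y0 S, y S)"
    using min by blast
  obtain \<delta> where "0 < \<delta>" and close: "\<And>T x N S y Y0. reparam T x N S y Y0 \<Longrightarrow>
      dproc T T (\<lambda>t. (x t, N t)) Tb Tb (\<lambda>t. (xb t, nu ub t)) < \<delta> \<Longrightarrow>
      dproc T S (\<lambda>s. (y s, s - Y0 s)) Tb Sb (\<lambda>s. (yb s, s - Y0b s)) < \<delta>'"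
    using st_dist_small_if_strict_dist_small[OF rb \<open>0 < \<delta>'\<close>] by blast
  note ref = reparam.Y0_S[OF rb] reparam.y_S[OF rb]
  show ?thesis
    unfolding strict_Linf_local_min_def
  proof (intro conjI exI[of _ \<delta>] allI impI)
    fix T u x
    assume H: "strict_feasible f g x0 \<TT> T u x \<and>
        dproc T T (\<lambda>t. (x t, nu u t)) Tb Tb (\<lambda>t. (xb t, nu ub t)) < \<delta>"
    define Y where "Y = inv_into {0..T} (sigma_I u)"
    let ?\<omega>\<^sub>0 = "\<lambda>s. inverse (1 + norm (u (Y s)))"
    let ?\<omega> = "\<lambda>s. inverse (1 + norm (u (Y s))) *\<^sub>R u (Y s)"
    have sp: "strict_process f g x0 T u x" using H by (simp add: strict_feasible_def)
    note st = st_process_of_strict_process[OF fc gc sp, folded Y_def]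
    have S: "0 \<le> sigma_I u T" "Y (sigma_I u T) = T"
      using reparam.T_le_S[OF st(2)] reparam.T_pos[OF st(2)] reparam.Y0_S[OF st(2)] by auto
    have "dproc T (sigma_I u T) (\<lambda>s. (x (Y s), s - Y s)) Tb Sb (\<lambda>s. (yb s, s - Y0b s)) < \<delta>'"
      using close[OF st(2)] H by simp
    moreover have "dproc T (sigma_I u T) (\<lambda>s. (x (Y s), nu ?\<omega> s)) Tb Sb
        (\<lambda>s. (yb s, nu wb s)) = dproc T (sigma_I u T) (\<lambda>s. (x (Y s), s - Y s)) Tb Sb (\<lambda>s. (yb s, s - Y0b s))"
      by (rule dproc_cong) (use st(3) nu_wb S reparam.T_le_S[OF rb] reparam.T_pos[OF rb] in auto)
    moreover have "AE s in lebesgue_on {0..sigma_I u T}. ?\<omega>\<^sub>0 s > 0"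
      by (rule AE_I2) (simp add: add_pos_nonneg)
    ultimately show "\<Psi> (Tb, xb Tb) \<le> \<Psi> (T, x T)"
      using min_\<delta>'[of "sigma_I u T" ?\<omega>\<^sub>0 ?\<omega> Y "\<lambda>s. x (Y s)"] st(1) H S ref
      by (simp add: st_feasible_def strict_feasible_def)
  qed (use feas \<open>0 < \<delta>\<close> in auto)
qed

theorem mainTheorem2:
  fixes f :: "real^'n \<Rightarrow> real^'n" and g :: "'m::finite \<Rightarrow> real^'n \<Rightarrow> real^'n"
    and x0 :: "real^'n" and \<Psi> :: "real \<times> (real^'n) \<Rightarrow> real"
    and r1 r2 :: nat and \<phi> \<psi> :: "nat \<Rightarrow> real \<times> (real^'n) \<Rightarrow> real"
    and Tb :: real and ub :: "real \<Rightarrow> real^'m" and xb :: "real \<Rightarrow> real^'n"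
  assumes f_smooth: "smooth_field f"
    and g_smooth: "\<And>i. smooth_field (g i)"
    and Psi_C1: "C1_fun \<Psi>"
    and phi_C1: "\<And>i. i < r1 \<Longrightarrow> C1_fun (\<phi> i)"
    and psi_C1: "\<And>j. j < r2 \<Longrightarrow> C1_fun (\<psi> j)"
    and feas: "strict_feasible f g x0 (target r1 \<phi> r2 \<psi>) Tb ub xb"
  defines "Sb \<equiv> sigma_I ub Tb"
    and "y0b \<equiv> inv_into {0..Tb} (sigma_I ub)"
    and "w0b \<equiv> (\<lambda>s. inverse (1 + norm (ub (inv_into {0..Tb} (sigma_I ub) s))))"
    and "wb \<equiv> (\<lambda>s. inverse (1 + norm (ub (inv_into {0..Tb} (sigma_I ub) s)))
                     *\<^sub>R ub (inv_into {0..Tb} (sigma_I ub) s))"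
    and "yb \<equiv> (\<lambda>s. xb (inv_into {0..Tb} (sigma_I ub) s))"
  shows "(strict_Linf_local_min f g x0 (target r1 \<phi> r2 \<psi>) \<Psi> Tb ub xb \<longleftrightarrow>
           (\<exists>\<delta>'>0. \<forall>S w0 w y0 y.
              st_feasible f g x0 (target r1 \<phi> r2 \<psi>) S w0 w y0 y \<and>
              (AE s in lebesgue_on {0..S}. w0 s > 0) \<and>
              dproc (y0 S) S (\<lambda>s. (y s, nu w s)) (y0b Sb) Sb (\<lambda>s. (yb s, nu wb s)) < \<delta>'
              \<longrightarrow> \<Psi> (y0b Sb, yb Sb) \<le> \<Psi> (y0 S, y S)))
         \<and> \<Psi> (y0b Sb, yb Sb) = \<Psi> (Tb, xb Tb)"
proof -
  have fc: "continuous_on UNIV f" and gc: "\<And>i. continuous_on UNIV (g i)"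
    using f_smooth g_smooth by (auto intro: smooth_field_continuous)
  have "strict_process f g x0 Tb ub xb" using feas by (simp add: strict_feasible_def)
  note ref = st_process_of_strict_process[OF fc gc this, folded wb_def yb_def, folded y0b_def Sb_def]
  note reparam.Y0_S[OF ref(2)] reparam.y_S[OF ref(2)]
  moreover note iffI[OF st_local_min_if_strict_local_min[OF fc gc _ ref(2,3)]
      strict_local_min_if_st_local_min[OF fc gc feas ref(2,3)]]
  ultimately show ?thesis by simp
qed

end
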